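(* Let $V$ be a locally convex space, $\Omega\subset V$ open, $I=[\alpha,\beta]\subset\mathbb R$, and let $g$ be a Riemannian metric on $\Omega$ that admits a Levi–Civita connection. (a) A curve $x\in C^2(I,\Omega)$ is energy critical if and only if it is a geodesic. (b) Suppose there is a family $L$ of continuous linear forms on $V$ such that $\bigcap\{\ker l\colon l\in L\}=(0)$, and for every $l\in L$ and $v\in\Omega$ there is an $\eta\in V$ with $l=g(v,\eta,\cdot)$. Then every energy critical $x\in C^1(I,\Omega)$ is $C^2$, and hence is a geodesic.
   Context: All locally convex spaces are real, Hausdorff and sequentially complete. $f$ is $C^1$ if directional derivatives $df(v,\xi)=\lim_{t\to0}(f(v+t\xi)-f(v))/t$ exist and $df$ is continuous; $C^k$ inductively; for a subset $S$, $C^k(S,W)$ means maps extending to $C^k$ maps on an open neighborhood of $S$. A Riemannian metric on $\Omega$ is a map $g\colon\Omega\times V\times V\to\mathbb R$ with each $g(v,\cdot,\cdot)$ positive definite symmetric bilinear. For a $C^1$ metric $g$, a Levi–Civita connection is $D_\xi\varphi(v)=d\varphi(v,\xi)+A(v,\xi)\varphi(v)$ with $A(v,\xi)$ a continuous linear map $V\to V$, linear in $\xi$, $(v,\xi,w)\mapsto A(v,\xi)w$ continuous, $A(v,\xi)\eta=A(v,\eta)\xi$, and $\xi g(\cdot,\varphi,\psi)=g(\cdot,D_\xi\varphi,\psi)+g(\cdot,\varphi,D_\xi\psi)$ for all $\xi\in V$, $\varphi,\psi\in C^1(\Omega,V)$. A geodesic is a $C^2$ curve $x$ with $\ddot x+A(x,\dot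 x)\dot x=0$. The energy of $x\in C^1(I,\Omega)$ is $E(x)=\frac12\int_\alpha^\beta g\big(x(t),\dot x(t),\dot x(t)\big)dt$; $E$ is a $C^1$ function on the open subset $C^1(I,\Omega)$ of the locally convex space $C^1(I,V)$ (topologized by the seminorms $\sup_I p(u)$, $\sup_I p(\dot u)$ for continuous seminorms $p$ on $V$). For $a,b\in\Omega$, $C^1_{ab}(I,\Omega)=\{x\in C^1(I,\Omega)\colon x(\alpha)=a,\ x(\beta)=b\}$. A curve $x\in C^1(I,\Omega)$ is energy critical if it is a critical point of $E$ restricted to $C^1_{x(\alpha)x(\beta)}(I,\Omega)$, i.e. $dE(x,y)=0$ for all $y\in C^1(I,V)$ with $y(\alpha)=y(\beta)=0$. *)

theory Defs
  imports "HOL-Analysis.Analysis"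
begin

text \<open>Locally convex spaces: the type 'v carries a real vector space structure and a
Hausdorff topology (class t2_space); the predicate below requires continuity of the
vector operations, local convexity and sequential completeness.\<close>

definition lcs :: "'v::{real_vector,t2_space} itself \<Rightarrow> bool" where
  "lcs (_::'v itself) \<longleftrightarrow>
     continuous_on UNIV (\<lambda>(x::'v, y::'v). x + y) \<and>
     continuous_on UNIV (\<lambda>(a::real, x::'v). a *\<^sub>R x) \<and>
     (\<forall>U::'v set. open U \<and> 0 \<in> U \<longrightarrow> (\<exists>C. open C \<and> convex C \<and> 0 \<in> C \<and> C \<subseteq> U)) \<and>
     (\<forall>X::nat \<Rightarrow> 'v.
        (\<forall>U. open U \<and> 0 \<in> U \<longrightarrow> (\<exists>N. \<forall>m\<ge>N. \<forall>n\<ge>N. X m - X n \<in> U))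
        \<longrightarrow> (\<exists>l. X \<longlonglongrightarrow> l))"

definition has_dirderiv ::
  "('a::real_vector \<Rightarrow> 'b::{real_vector,topological_space}) \<Rightarrow> 'a \<Rightarrow> 'a \<Rightarrow> 'b \<Rightarrow> bool" where
  "has_dirderiv f v \<xi> d \<longleftrightarrow>
     ((\<lambda>t::real. (1 / t) *\<^sub>R (f (v + t *\<^sub>R \<xi>) - f v)) \<longlongrightarrow> d) (at 0)"

definition dd ::
  "('a::real_vector \<Rightarrow> 'b::{real_vector,t2_space}) \<Rightarrow> 'a \<Rightarrow> 'a \<Rightarrow> 'b" where
  "dd f v \<xi> = Lim (at (0::real)) (\<lambda>t. (1 / t) *\<^sub>R (f (v + t *\<^sub>R \<xi>) - f v))"

definition C1 ::
  "'a::{real_vector,topological_space} set \<Rightarrow> ('a \<Rightarrow> 'b::{real_vector,t2_space}) \<Rightarrow> bool" where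
  "C1 U f \<longleftrightarrow> open U \<and> (\<forall>v\<in>U. \<forall>\<xi>. \<exists>d. has_dirderiv f v \<xi> d) \<and>
     continuous_on (U \<times> UNIV) (\<lambda>(v, \<xi>). dd f v \<xi>)"

definition C2 ::
  "'a::{real_vector,topological_space} set \<Rightarrow> ('a \<Rightarrow> 'b::{real_vector,t2_space}) \<Rightarrow> bool" where
  "C2 U f \<longleftrightarrow> C1 U f \<and> C1 (U \<times> UNIV) (\<lambda>(v, \<xi>). dd f v \<xi>)"

definition C1_curve :: "'v::{real_vector,t2_space} set \<Rightarrow> real \<Rightarrow> real \<Rightarrow> (real \<Rightarrow> 'v) \<Rightarrow> bool" where
  "C1_curve S \<alpha> \<beta> x \<longleftrightarrow> (\<exists>U y. open U \<and> {\<alpha>..\<beta>} \<subseteq> U \<and> C1 U y \<and> (\<forall>t\<in>{\<alpha>..\<beta>}. y t = x t))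
     \<and> x ` {\<alpha>..\<beta>} \<subseteq> S"

definition C2_curve :: "'v::{real_vector,t2_space} set \<Rightarrow> real \<Rightarrow> real \<Rightarrow> (real \<Rightarrow> 'v) \<Rightarrow> bool" where
  "C2_curve S \<alpha> \<beta> x \<longleftrightarrow> (\<exists>U y. open U \<and> {\<alpha>..\<beta>} \<subseteq> U \<and> C2 U y \<and> (\<forall>t\<in>{\<alpha>..\<beta>}. y t = x t))
     \<and> x ` {\<alpha>..\<beta>} \<subseteq> S"

text \<open>Velocity of a curve on I (derivative within I; coincides on I with the derivative
of any C^1 extension).\<close>

definition vel :: "real \<Rightarrow> real \<Rightarrow> (real \<Rightarrow> 'v::{real_vector,t2_space}) \<Rightarrow> real \<Rightarrow> 'v" where
  "vel \<alpha> \<beta> x t = Lim (at t within {\<alpha>..\<beta>}) (\<lambda>s. (1 / (s - t)) *\<^sub>R (x s - x t))"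

definition riem_metric ::
  "'v::real_vector set \<Rightarrow> ('v \<Rightarrow> 'v \<Rightarrow> 'v \<Rightarrow> real) \<Rightarrow> bool" where
  "riem_metric \<Omega> g \<longleftrightarrow> (\<forall>v\<in>\<Omega>.
      (\<forall>\<eta>. linear (\<lambda>\<xi>. g v \<xi> \<eta>)) \<and> (\<forall>\<xi>. linear (\<lambda>\<eta>. g v \<xi> \<eta>)) \<and>
      (\<forall>\<xi> \<eta>. g v \<xi> \<eta> = g v \<eta> \<xi>) \<and> (\<forall>\<xi>. \<xi> \<noteq> 0 \<longrightarrow> g v \<xi> \<xi> > 0))"

definition covD :: "('v \<Rightarrow> 'v \<Rightarrow> 'v \<Rightarrow> 'v) \<Rightarrow> 'v \<Rightarrow> ('v \<Rightarrow> 'v) \<Rightarrow> 'v \<Rightarrow> 'v::{real_vector,t2_space}" where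
  "covD A \<xi> \<phi> v = dd \<phi> v \<xi> + A v \<xi> (\<phi> v)"

text \<open>A is (the Christoffel map of) a Levi-Civita connection of the C^1 metric g on Omega.
A v xi w stands for A(v,xi)w.\<close>

definition levi_civita ::
  "'v::{real_vector,t2_space} set \<Rightarrow> ('v \<Rightarrow> 'v \<Rightarrow> 'v \<Rightarrow> real) \<Rightarrow> ('v \<Rightarrow> 'v \<Rightarrow> 'v \<Rightarrow> 'v) \<Rightarrow> bool" where
  "levi_civita \<Omega> g A \<longleftrightarrow>
     C1 (\<Omega> \<times> UNIV \<times> UNIV) (\<lambda>(v, \<xi>, \<eta>). g v \<xi> \<eta>) \<and>
     (\<forall>v\<in>\<Omega>. \<forall>\<xi>. linear (A v \<xi>) \<and> continuous_on UNIV (A v \<xi>)) \<and>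
     (\<forall>v\<in>\<Omega>. \<forall>w. linear (\<lambda>\<xi>. A v \<xi> w)) \<and>
     continuous_on (\<Omega> \<times> UNIV \<times> UNIV) (\<lambda>(v, \<xi>, w). A v \<xi> w) \<and>
     (\<forall>v\<in>\<Omega>. \<forall>\<xi> \<eta>. A v \<xi> \<eta> = A v \<eta> \<xi>) \<and>
     (\<forall>\<xi> \<phi> \<psi>. C1 \<Omega> \<phi> \<and> C1 \<Omega> \<psi> \<longrightarrow>
        (\<forall>v\<in>\<Omega>. has_dirderiv (\<lambda>u. g u (\<phi> u) (\<psi> u)) v \<xi>
                   (g v (covD A \<xi> \<phi> v) (\<psi> v) + g v (\<phi> v) (covD A \<xi> \<psi> v))))"

definition geodesic ::
  "'v::{real_vector,t2_space} set \<Rightarrow> ('v \<Rightarrow> 'v \<Rightarrow> 'v \<Rightarrow> 'v) \<Rightarrow> real \<Rightarrow> real \<Rightarrow> (real \<Rightarrow> 'v) \<Rightarrow> bool" where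
  "geodesic \<Omega> A \<alpha> \<beta> x \<longleftrightarrow> C2_curve \<Omega> \<alpha> \<beta> x \<and>
     (\<forall>t\<in>{\<alpha>..\<beta>}. vel \<alpha> \<beta> (vel \<alpha> \<beta> x) t + A (x t) (vel \<alpha> \<beta> x t) (vel \<alpha> \<beta> x t) = 0)"

definition energy ::
  "('v \<Rightarrow> 'v \<Rightarrow> 'v \<Rightarrow> real) \<Rightarrow> real \<Rightarrow> real \<Rightarrow> (real \<Rightarrow> 'v::{real_vector,t2_space}) \<Rightarrow> real" where
  "energy g \<alpha> \<beta> x = (1 / 2) * integral {\<alpha>..\<beta>} (\<lambda>t. g (x t) (vel \<alpha> \<beta> x t) (vel \<alpha> \<beta> x t))"

definition energy_critical ::
  "'v::{real_vector,t2_space} set \<Rightarrow> ('v \<Rightarrow> 'v \<Rightarrow> 'v \<Rightarrow> real) \<Rightarrow> real \<Rightarrow> real \<Rightarrow> (real \<Rightarrow> 'v) \<Rightarrow> bool" where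
  "energy_critical \<Omega> g \<alpha> \<beta> x \<longleftrightarrow> C1_curve \<Omega> \<alpha> \<beta> x \<and>
     (\<forall>y. C1_curve UNIV \<alpha> \<beta> y \<and> y \<alpha> = 0 \<and> y \<beta> = 0 \<longrightarrow>
        ((\<lambda>s::real. (energy g \<alpha> \<beta> (\<lambda>t. x t + s *\<^sub>R y t) - energy g \<alpha> \<beta> x) / s) \<longlongrightarrow> 0) (at 0))"

end

theory Submission
  imports Defs
begin

text \<open>
  (a) The first variation of the energy at \<open>x\<close> in direction \<open>y\<close> is
  \<open>\<integral> g(x, A(x,y)x', x') + g(x, x', y')\<close>. Testing with \<open>y = \<phi> w\<close> for scalar \<open>\<phi>\<close>,
  the du Bois-Reymond lemma turns criticality into the weak geodesic equation
  \<open>d/dt g(x, x', w) = g(x, A(x,w)x', x')\<close>. For a \<open>C\<^sup>2\<close> curve, compatibility of the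
  connection with \<open>g\<close> computes the same derivative as
  \<open>g(x, x'' + A(x,x')x', w) + g(x, A(x,w)x', x')\<close>, so criticality is equivalent to
  \<open>x'' + A(x,x')x' = 0\<close>; conversely, along a geodesic the first variation integrand is an
  exact derivative of a function vanishing at the end points.

  (b) Freezing the base point in the weak geodesic equation shows that \<open>l(x')\<close> is
  differentiable with derivative \<open>l(-A(x,x')x')\<close> for every \<open>l = g(x(t), \<eta>, -)\<close> in \<open>L\<close>.
  The difference quotients of \<open>x'\<close> are limits of dyadic Riemann averages of the continuous
  curve \<open>-A(x,x')x'\<close> (these converge by sequential completeness); since \<open>L\<close> separates
  points and \<open>V\<close> is locally convex, \<open>x'\<close> is differentiable with that derivative.
  Extending \<open>x\<close> beyond \<open>[\<alpha>, \<beta>]\<close> by its second order Taylor polynomials gives a \<open>C\<^sup>2\<close> curve.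
\<close>

section \<open>Topological vector spaces\<close>

definition tvs :: "'e::{real_vector,topological_space} itself \<Rightarrow> bool" where
  "tvs _ \<longleftrightarrow> continuous_on UNIV (\<lambda>(x::'e, y::'e). x + y) \<and>
     continuous_on UNIV (\<lambda>(a::real, x::'e). a *\<^sub>R x)"

lemma lcs_imp_tvs: "lcs TYPE('v::{real_vector,t2_space}) \<Longrightarrow> tvs TYPE('v)"
  unfolding lcs_def tvs_def by blast

lemma tvs_tendsto_add:
  fixes f g :: "'a \<Rightarrow> 'e::{real_vector,topological_space}"
  assumes "tvs TYPE('e)" "(f \<longlongrightarrow> a) F" "(g \<longlongrightarrow> b) F"
  shows "((\<lambda>x. f x + g x) \<longlongrightarrow> a + b) F"
proof -
  have c: "continuous_on UNIV (\<lambda>(x::'e, y::'e). x + y)" using assms(1) unfolding tvs_def by blast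
  have "((\<lambda>x. (\<lambda>(x::'e, y::'e). x + y) (f x, g x)) \<longlongrightarrow> (\<lambda>(x::'e, y::'e). x + y) (a, b)) F"
    by (rule continuous_on_tendsto_compose[OF c tendsto_Pair[OF assms(2,3)]]) auto
  then show ?thesis by simp
qed

lemma tvs_tendsto_scaleR:
  fixes f :: "'a \<Rightarrow> 'e::{real_vector,topological_space}"
  assumes "tvs TYPE('e)" "(c \<longlongrightarrow> a) F" "(f \<longlongrightarrow> b) F"
  shows "((\<lambda>x. c x *\<^sub>R f x) \<longlongrightarrow> a *\<^sub>R b) F"
proof -
  have c: "continuous_on UNIV (\<lambda>(a::real, x::'e). a *\<^sub>R x)" using assms(1) unfolding tvs_def by blast
  have "((\<lambda>x. (\<lambda>(a::real, x::'e). a *\<^sub>R x) (c x, f x)) \<longlongrightarrow> (\<lambda>(a::real, x::'e). a *\<^sub>R x) (a, b)) F"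
    by (rule continuous_on_tendsto_compose[OF c tendsto_Pair[OF assms(2,3)]]) auto
  then show ?thesis by simp
qed

lemma tvs_tendsto_minus:
  fixes f :: "'a \<Rightarrow> 'e::{real_vector,topological_space}"
  assumes "tvs TYPE('e)" "(f \<longlongrightarrow> b) F"
  shows "((\<lambda>x. - f x) \<longlongrightarrow> - b) F"
  using tvs_tendsto_scaleR[OF assms(1) tendsto_const[of "-1"] assms(2)] by simp

lemma tvs_tendsto_diff:
  fixes f g :: "'a \<Rightarrow> 'e::{real_vector,topological_space}"
  assumes "tvs TYPE('e)" "(f \<longlongrightarrow> a) F" "(g \<longlongrightarrow> b) F"
  shows "((\<lambda>x. f x - g x) \<longlongrightarrow> a - b) F"
  using tvs_tendsto_add[OF assms(1,2) tvs_tendsto_minus[OF assms(1,3)]] by simp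

lemma tvs_prod:
  assumes a: "tvs TYPE('a::{real_vector,topological_space})"
    and b: "tvs TYPE('b::{real_vector,topological_space})"
  shows "tvs TYPE('a \<times> 'b)"
proof -
  have 1: "continuous_on UNIV (\<lambda>(x::'a\<times>'b, y::'a\<times>'b). x + y)"
    unfolding continuous_on_def
  proof (intro ballI)
    fix p :: "('a\<times>'b)\<times>('a\<times>'b)"
    let ?F = "at p within UNIV"
    have t1: "((\<lambda>q. fst (fst q) + fst (snd q)) \<longlongrightarrow> fst (fst p) + fst (snd p)) ?F"
      by (intro tvs_tendsto_add[OF a] tendsto_fst tendsto_snd tendsto_ident_at)
    have t2: "((\<lambda>q. snd (fst q) + snd (snd q)) \<longlongrightarrow> snd (fst p) + snd (snd p)) ?F"
      by (intro tvs_tendsto_add[OF b] tendsto_fst tendsto_snd tendsto_ident_at)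
    show "((\<lambda>(x, y). x + y) \<longlongrightarrow> (case p of (x, y) \<Rightarrow> x + y)) ?F"
      using tendsto_Pair[OF t1 t2] by (simp add: split_def plus_prod_def)
  qed
  have 2: "continuous_on UNIV (\<lambda>(c::real, x::'a\<times>'b). c *\<^sub>R x)"
    unfolding continuous_on_def
  proof (intro ballI)
    fix p :: "real\<times>('a\<times>'b)"
    let ?F = "at p within UNIV"
    have t1: "((\<lambda>q. fst q *\<^sub>R fst (snd q)) \<longlongrightarrow> fst p *\<^sub>R fst (snd p)) ?F"
      by (intro tvs_tendsto_scaleR[OF a] tendsto_fst tendsto_snd tendsto_ident_at)
    have t2: "((\<lambda>q. fst q *\<^sub>R snd (snd q)) \<longlongrightarrow> fst p *\<^sub>R snd (snd p)) ?F"
      by (intro tvs_tendsto_scaleR[OF b] tendsto_fst tendsto_snd tendsto_ident_at)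
    show "((\<lambda>(c, x). c *\<^sub>R x) \<longlongrightarrow> (case p of (c, x) \<Rightarrow> c *\<^sub>R x)) ?F"
      using tendsto_Pair[OF t1 t2] by (simp add: split_def scaleR_prod_def)
  qed
  show ?thesis unfolding tvs_def using 1 2 by blast
qed

lemma tvs_continuous_on_add:
  fixes f g :: "'a::topological_space \<Rightarrow> 'e::{real_vector,topological_space}"
  assumes "tvs TYPE('e)" "continuous_on S f" "continuous_on S g"
  shows "continuous_on S (\<lambda>x. f x + g x)"
  using assms unfolding continuous_on_def by (auto intro: tvs_tendsto_add[OF assms(1)])

lemma tvs_continuous_on_scaleR:
  fixes f :: "'a::topological_space \<Rightarrow> 'e::{real_vector,topological_space}"
  assumes "tvs TYPE('e)" "continuous_on S c" "continuous_on S f"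
  shows "continuous_on S (\<lambda>x. c x *\<^sub>R f x)"
  using assms unfolding continuous_on_def by (auto intro: tvs_tendsto_scaleR[OF assms(1)])

lemma tvs_open_translate:
  fixes S :: "'e::{real_vector,t2_space} set"
  assumes "tvs TYPE('e)" "open S"
  shows "open {u. c + u \<in> S}"
proof -
  have "continuous_on UNIV (\<lambda>u::'e. c + u)"
    unfolding continuous_on_def by (intro ballI tvs_tendsto_add[OF assms(1)] tendsto_const tendsto_ident_at)
  from open_vimage[OF assms(2) this] show ?thesis by (simp add: vimage_def)
qed

lemma tvs_open_scale:
  fixes S :: "'e::{real_vector,t2_space} set"
  assumes "tvs TYPE('e)" "open S"
  shows "open {u. c *\<^sub>R u \<in> S}"
proof -
  have "continuous_on UNIV (\<lambda>u::'e. c *\<^sub>R u)"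
    unfolding continuous_on_def by (intro ballI tvs_tendsto_scaleR[OF assms(1)] tendsto_const tendsto_ident_at)
  from open_vimage[OF assms(2) this] show ?thesis by (simp add: vimage_def)
qed

lemma tvs_add_nbhd:
  fixes S :: "'e::{real_vector,t2_space} set"
  assumes tvs: "tvs TYPE('e)" and S: "open S" "0 \<in> S"
  obtains V where "open V" "0 \<in> V" "\<And>a b. a \<in> V \<Longrightarrow> b \<in> V \<Longrightarrow> a + b \<in> S"
proof -
  have c: "continuous_on UNIV (\<lambda>(x::'e, y::'e). x + y)" using tvs unfolding tvs_def by blast
  have "open ((\<lambda>(x::'e, y::'e). x + y) -` S)" by (rule open_vimage[OF S(1) c])
  moreover have "(0::'e, 0::'e) \<in> (\<lambda>(x::'e, y::'e). x + y) -` S" using S(2) by simp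
  ultimately obtain A B where AB: "open A" "open B" "(0,0) \<in> A \<times> B" "A \<times> B \<subseteq> (\<lambda>(x::'e, y::'e). x + y) -` S"
    by (rule open_prod_elim)
  show ?thesis
  proof (rule that[of "A \<inter> B"])
    show "open (A \<inter> B)" using AB by auto
    show "0 \<in> A \<inter> B" using AB by auto
    fix a b assume "a \<in> A \<inter> B" "b \<in> A \<inter> B"
    then have "(a, b) \<in> A \<times> B" by auto
    then show "a + b \<in> S" using AB(4) by auto
  qed
qed

lemma tvs_diff_nbhd:
  fixes S :: "'e::{real_vector,t2_space} set"
  assumes tvs: "tvs TYPE('e)" and S: "open S" "0 \<in> S"
  obtains V where "open V" "0 \<in> V" "\<And>a b. a \<in> V \<Longrightarrow> b \<in> V \<Longrightarrow> a - b \<in> S"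
proof -
  obtain V where V: "open V" "0 \<in> V" "\<And>a b. a \<in> V \<Longrightarrow> b \<in> V \<Longrightarrow> a + b \<in> S"
    using tvs_add_nbhd[OF assms] by blast
  define V' where "V' = V \<inter> {u. (-1) *\<^sub>R u \<in> V}"
  show ?thesis
  proof (rule that[of V'])
    have "open {u. (-1) *\<^sub>R u \<in> V}" by (rule tvs_open_scale[OF tvs V(1)])
    then show "open V'" unfolding V'_def using V(1) by (intro open_Int) auto
    show "0 \<in> V'" using V(2) by (simp add: V'_def)
    fix a b assume "a \<in> V'" "b \<in> V'"
    then have "a \<in> V" "(-1) *\<^sub>R b \<in> V" by (auto simp: V'_def)
    from V(3)[OF this] show "a - b \<in> S" by simp
  qed
qed

lemma tvs_regular:
  fixes S :: "'e::{real_vector,t2_space} set"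
  assumes tvs: "tvs TYPE('e)" and S: "open S" "0 \<in> S"
  obtains V where "open V" "0 \<in> V" "closure V \<subseteq> S"
proof -
  obtain V where V: "open V" "0 \<in> V" "\<And>a b. a \<in> V \<Longrightarrow> b \<in> V \<Longrightarrow> a + b \<in> S"
    using tvs_add_nbhd[OF assms] by blast
  have "x \<in> S" if x: "x \<in> closure V" for x
  proof -
    define N where "N = {u. (-1) *\<^sub>R u \<in> {w. x + w \<in> V}}"
    have oN: "open N" unfolding N_def by (rule tvs_open_scale[OF tvs tvs_open_translate[OF tvs V(1)]])
    have xN: "x \<in> N" using V(2) by (simp add: N_def)
    obtain u where "u \<in> V" "u \<in> N" using x oN xN unfolding closure_iff_nhds_not_empty by blast
    then have "u \<in> V" "x - u \<in> V" by (auto simp: N_def)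
    from V(3)[OF this] show "x \<in> S" by simp
  qed
  then show ?thesis using that V(1,2) by blast
qed

lemma tvs_uniformly_continuous:
  fixes \<zeta> :: "real \<Rightarrow> 'e::{real_vector,t2_space}"
  assumes tvs: "tvs TYPE('e)" and K: "compact K" and c: "continuous_on K \<zeta>"
    and U: "open U" "0 \<in> U"
  obtains \<delta> where "\<delta> > 0" "\<And>s s'. s \<in> K \<Longrightarrow> s' \<in> K \<Longrightarrow> \<bar>s - s'\<bar> < \<delta> \<Longrightarrow> \<zeta> s - \<zeta> s' \<in> U"
proof -
  obtain W where W: "open W" "0 \<in> W" "\<And>a b. a \<in> W \<Longrightarrow> b \<in> W \<Longrightarrow> a - b \<in> U"
    using tvs_diff_nbhd[OF tvs U] by blast
  define \<G> where "\<G> = {G. open G \<and> (\<exists>c\<in>K. \<forall>s'\<in>K. s' \<in> G \<longrightarrow> \<zeta> s' - \<zeta> c \<in> W)}"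
  have cov: "K \<subseteq> \<Union>\<G>"
  proof
    fix c assume cK: "c \<in> K"
    have "open {u. (-1) *\<^sub>R \<zeta> c + u \<in> W}" by (rule tvs_open_translate[OF tvs W(1)])
    moreover have "\<zeta> c \<in> {u. (-1) *\<^sub>R \<zeta> c + u \<in> W}" using W(2) by simp
    ultimately obtain A where A: "open A" "c \<in> A" "\<forall>y\<in>K. y \<in> A \<longrightarrow> \<zeta> y \<in> {u. (-1) *\<^sub>R \<zeta> c + u \<in> W}"
      using c cK unfolding continuous_on_topological by metis
    then have "A \<in> \<G>" unfolding \<G>_def using cK by (auto simp: algebra_simps)
    then show "c \<in> \<Union>\<G>" using A(2) by blast
  qed
  obtain e where e: "e > 0" "\<And>x. x \<in> K \<Longrightarrow> \<exists>G\<in>\<G>. ball x e \<subseteq> G"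
    using Heine_Borel_lemma[OF K cov] \<G>_def by blast
  show ?thesis
  proof (rule that[OF e(1)])
    fix s s' assume s: "s \<in> K" and s': "s' \<in> K" and d: "\<bar>s - s'\<bar> < e"
    obtain G where G: "G \<in> \<G>" "ball s e \<subseteq> G" using e(2)[OF s] by blast
    obtain c where cc: "c \<in> K" "\<forall>s'\<in>K. s' \<in> G \<longrightarrow> \<zeta> s' - \<zeta> c \<in> W" using G(1) unfolding \<G>_def by blast
    have "s \<in> G" "s' \<in> G" using G(2) e(1) d by (auto simp: dist_real_def)
    then have "\<zeta> s - \<zeta> c \<in> W" "\<zeta> s' - \<zeta> c \<in> W" using cc s s' by auto
    from W(3)[OF this] show "\<zeta> s - \<zeta> s' \<in> U" by simp
  qed
qed

lemma convex_average:
  fixes u :: "nat \<Rightarrow> 'e::real_vector"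
  assumes "convex C" "N > 0" "\<And>k. k < N \<Longrightarrow> u k \<in> C"
  shows "(\<Sum>k<N. (1 / real N) *\<^sub>R u k) \<in> C"
  by (rule convex_sum[OF finite_lessThan assms(1)]) (use assms in auto)

section \<open>Calculus on a compact interval\<close>

lemma at_within_Icc_neq_bot:
  fixes \<alpha> \<beta> t :: real
  assumes "\<alpha> < \<beta>" "t \<in> {\<alpha>..\<beta>}"
  shows "at t within {\<alpha>..\<beta>} \<noteq> bot"
proof -
  consider "t = \<alpha>" | "t = \<beta>" | "\<alpha> < t \<and> t < \<beta>" using assms by force
  then show ?thesis
  proof cases
    case 1 then show ?thesis using assms at_within_Icc_at_right[of \<alpha> \<beta>] by simp
  next
    case 2 then show ?thesis using assms at_within_Icc_at_left[of \<alpha> \<beta>] by simp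
  next
    case 3 then show ?thesis using at_within_Icc_at[of \<alpha> t \<beta>] by simp
  qed
qed

lemma integral_DERIV_within:
  fixes k k' :: "real \<Rightarrow> real"
  assumes "\<alpha> \<le> \<beta>" "\<And>t. t \<in> {\<alpha>..\<beta>} \<Longrightarrow> (k has_real_derivative k' t) (at t within {\<alpha>..\<beta>})"
  shows "integral {\<alpha>..\<beta>} k' = k \<beta> - k \<alpha>"
  by (rule integral_unique, rule fundamental_theorem_of_calculus[OF assms(1)])
     (use assms(2) in \<open>auto simp: has_real_derivative_iff_has_vector_derivative\<close>)

lemma DERIV_within_continuous_on:
  fixes k k' :: "real \<Rightarrow> real"
  assumes "\<And>t. t \<in> S \<Longrightarrow> (k has_real_derivative k' t) (at t within S)"
  shows "continuous_on S k"
  using assms DERIV_continuous continuous_on_eq_continuous_within by blast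

lemma MVT_abs:
  fixes f f' :: "real \<Rightarrow> real"
  assumes "\<And>\<sigma>. \<bar>\<sigma>\<bar> \<le> \<bar>t\<bar> \<Longrightarrow> (f has_real_derivative f' \<sigma>) (at \<sigma>)"
  shows "\<exists>\<theta>. \<bar>\<theta>\<bar> \<le> \<bar>t\<bar> \<and> f t - f 0 = t * f' \<theta>"
proof (cases "t = 0")
  case True then show ?thesis by auto
next
  case False
  show ?thesis
  proof (cases "t > 0")
    case True
    have c: "continuous_on {0..t} f"
      by (rule continuous_at_imp_continuous_on) (metis DERIV_isCont assms True atLeastAtMost_iff abs_of_nonneg order_trans)
    have "\<exists>l z. 0 < z \<and> z < t \<and> (f has_real_derivative l) (at z) \<and> f t - f 0 = (t - 0) * l"
      apply (rule MVT[OF True c])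
      subgoal for x using assms[of x] True by (auto simp: real_differentiable_def)
      done
    then obtain l z where "0 < z" "z < t" "(f has_real_derivative l) (at z)" "f t - f 0 = t * l" by auto
    moreover have "l = f' z" using DERIV_unique[OF \<open>(f has_real_derivative l) (at z)\<close>] assms \<open>0<z\<close> \<open>z<t\<close> by auto
    ultimately show ?thesis by (intro exI[of _ z]) auto
  next
    case False
    with \<open>t \<noteq> 0\<close> have tn: "t < 0" by auto
    have c: "continuous_on {t..0} f"
      by (rule continuous_at_imp_continuous_on) (smt (verit) DERIV_isCont assms tn atLeastAtMost_iff)
    have "\<exists>l z. t < z \<and> z < 0 \<and> (f has_real_derivative l) (at z) \<and> f 0 - f t = (0 - t) * l"
      apply (rule MVT[OF tn c])
      subgoal for x using assms[of x] tn by (auto simp: real_differentiable_def)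
      done
    then obtain l z where "t < z" "z < 0" "(f has_real_derivative l) (at z)" "f 0 - f t = (0 - t) * l" by auto
    moreover have "l = f' z" using DERIV_unique[OF \<open>(f has_real_derivative l) (at z)\<close>] assms \<open>t<z\<close> \<open>z<0\<close> by auto
    ultimately show ?thesis by (intro exI[of _ z]) (auto simp: algebra_simps)
  qed
qed

lemma MVT_within_Icc:
  fixes f f' :: "real \<Rightarrow> real"
  assumes ab: "\<alpha> < \<beta>" and d: "\<And>t. t \<in> {\<alpha>..\<beta>} \<Longrightarrow> (f has_real_derivative f' t) (at t within {\<alpha>..\<beta>})"
    and uv: "\<alpha> \<le> u" "u < v" "v \<le> \<beta>"
  shows "\<exists>\<theta>. u < \<theta> \<and> \<theta> < v \<and> f v - f u = (v - u) * f' \<theta>"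
proof -
  have cI: "continuous_on {\<alpha>..\<beta>} f" by (rule DERIV_within_continuous_on[OF d])
  have c: "continuous_on {u..v} f" by (rule continuous_on_subset[OF cI]) (use uv in auto)
  have dat: "(f has_real_derivative f' x) (at x)" if "u < x" "x < v" for x
  proof -
    have "\<alpha> < x" "x < \<beta>" using that uv by auto
    then show ?thesis using d[of x] at_within_Icc_at[of \<alpha> x \<beta>] by auto
  qed
  obtain l \<theta> where th: "u < \<theta>" "\<theta> < v" "(f has_real_derivative l) (at \<theta>)" "f v - f u = (v - u) * l"
    using MVT[OF uv(2) c] dat by (metis real_differentiable_def)
  have "l = f' \<theta>" using DERIV_unique[OF th(3) dat[OF th(1,2)]] .
  then show ?thesis using th by blast
qed

lemma isCont_eventually_cone:
  fixes f :: "real \<times> real \<Rightarrow> 'a::topological_space"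
  assumes "isCont f (0,0)" "open W" "f (0,0) \<in> W"
  shows "\<exists>d>0. \<forall>t \<sigma>. \<bar>t\<bar> < d \<longrightarrow> \<bar>\<sigma>\<bar> \<le> \<bar>t\<bar> \<longrightarrow> f (t,\<sigma>) \<in> W"
proof -
  have "\<forall>\<^sub>F q in at (0,0). f q \<in> W"
    using assms unfolding continuous_at by (simp add: tendsto_def)
  then obtain d where d: "d > 0" "\<And>q. q \<noteq> (0,0) \<Longrightarrow> dist q (0,0) < d \<Longrightarrow> f q \<in> W"
    unfolding eventually_at by auto
  show ?thesis
  proof (intro exI[of _ "d/2"] conjI allI impI)
    fix t \<sigma> :: real assume "\<bar>t\<bar> < d/2" "\<bar>\<sigma>\<bar> \<le> \<bar>t\<bar>"
    show "f (t,\<sigma>) \<in> W"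
    proof (cases "(t,\<sigma>) = (0,0)")
      case True then show ?thesis using assms by simp
    next
      case False
      have "dist (t,\<sigma>) (0,0) \<le> \<bar>t\<bar> + \<bar>\<sigma>\<bar>"
        using norm_Pair_le[of t \<sigma>] by (simp add: dist_norm)
      then show ?thesis using d False \<open>\<bar>t\<bar> < d/2\<close> \<open>\<bar>\<sigma>\<bar> \<le> \<bar>t\<bar>\<close> by auto
    qed
  qed (use d in auto)
qed

lemma MVT_diff_quotient_tendsto:
  fixes H :: "real \<Rightarrow> real \<Rightarrow> real" and \<Phi> :: "real \<times> real \<Rightarrow> real"
  assumes cont: "isCont \<Phi> (0,0)"
    and der: "\<exists>d>0. \<forall>t \<sigma>. \<bar>t\<bar> < d \<longrightarrow> \<bar>\<sigma>\<bar> \<le> \<bar>t\<bar> \<longrightarrow> (H t has_real_derivative \<Phi> (t,\<sigma>)) (at \<sigma>)"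
  shows "((\<lambda>t. (H t t - H t 0) / t) \<longlongrightarrow> \<Phi> (0,0)) (at 0)"
proof (rule tendstoI)
  fix e :: real assume e: "e > 0"
  obtain d where d: "d > 0" "\<And>t \<sigma>. \<bar>t\<bar> < d \<Longrightarrow> \<bar>\<sigma>\<bar> \<le> \<bar>t\<bar> \<Longrightarrow> (H t has_real_derivative \<Phi> (t,\<sigma>)) (at \<sigma>)"
    using der by blast
  obtain d' where d': "d' > 0" "\<And>t \<sigma>. \<bar>t\<bar> < d' \<Longrightarrow> \<bar>\<sigma>\<bar> \<le> \<bar>t\<bar> \<Longrightarrow> \<Phi> (t,\<sigma>) \<in> ball (\<Phi> (0,0)) e"
    using isCont_eventually_cone[OF cont, of "ball (\<Phi> (0,0)) e"] e by auto
  show "\<forall>\<^sub>F t in at 0. dist ((H t t - H t 0) / t) (\<Phi> (0,0)) < e"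
    unfolding eventually_at
  proof (intro exI[of _ "min d d'"] conjI ballI impI)
    show "0 < min d d'" using d d' by auto
  next
    fix t :: real assume "t \<in> UNIV" and t: "t \<noteq> 0 \<and> dist t 0 < min d d'"
    obtain \<theta> where th: "\<bar>\<theta>\<bar> \<le> \<bar>t\<bar>" "H t t - H t 0 = t * \<Phi> (t,\<theta>)"
      using MVT_abs[of t "H t" "\<lambda>\<sigma>. \<Phi> (t,\<sigma>)"] d(2) t by auto
    have "(H t t - H t 0) / t = \<Phi> (t,\<theta>)" using th t by auto
    then show "dist ((H t t - H t 0) / t) (\<Phi> (0,0)) < e"
      using d'(2)[of t \<theta>] th t by (auto simp: dist_commute)
  qed
qed

lemma integral_by_parts_boundary_zero:
  fixes a \<phi> \<phi>' :: "real \<Rightarrow> real"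
  assumes ab: "\<alpha> < \<beta>" and ca: "continuous_on {\<alpha>..\<beta>} a"
    and d\<phi>: "\<And>t. t \<in> {\<alpha>..\<beta>} \<Longrightarrow> (\<phi> has_real_derivative \<phi>' t) (at t within {\<alpha>..\<beta>})"
    and c\<phi>': "continuous_on {\<alpha>..\<beta>} \<phi>'" and z: "\<phi> \<alpha> = 0" "\<phi> \<beta> = 0"
  shows "integral {\<alpha>..\<beta>} (\<lambda>t. \<phi> t * a t) = - integral {\<alpha>..\<beta>} (\<lambda>t. \<phi>' t * integral {\<alpha>..t} a)"
proof -
  let ?I = "{\<alpha>..\<beta>}"
  define Aa where "Aa = (\<lambda>t. integral {\<alpha>..t} a)"
  have dA: "(Aa has_real_derivative a t) (at t within ?I)" if "t \<in> ?I" for t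
    using integral_has_vector_derivative[OF ca that] unfolding Aa_def
    by (simp add: has_real_derivative_iff_has_vector_derivative)
  have cA: "continuous_on ?I Aa" by (rule DERIV_within_continuous_on[OF dA])
  have c\<phi>: "continuous_on ?I \<phi>" by (rule DERIV_within_continuous_on[OF d\<phi>])
  have "integral ?I (\<lambda>t. \<phi> t * a t + \<phi>' t * Aa t) = \<phi> \<beta> * Aa \<beta> - \<phi> \<alpha> * Aa \<alpha>"
  proof (rule integral_DERIV_within)
    show "\<alpha> \<le> \<beta>" using ab by simp
    fix t assume t: "t \<in> ?I"
    show "((\<lambda>t. \<phi> t * Aa t) has_real_derivative \<phi> t * a t + \<phi>' t * Aa t) (at t within ?I)"
      using DERIV_mult[OF d\<phi>[OF t] dA[OF t]] by (simp add: algebra_simps)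
  qed
  moreover have "integral ?I (\<lambda>t. \<phi> t * a t + \<phi>' t * Aa t)
      = integral ?I (\<lambda>t. \<phi> t * a t) + integral ?I (\<lambda>t. \<phi>' t * Aa t)"
    by (intro integral_add integrable_continuous_interval continuous_intros ca cA c\<phi> c\<phi>')
  ultimately show ?thesis using z by (simp add: Aa_def)
qed

lemma mean_zero_test_function:
  fixes h :: "real \<Rightarrow> real"
  assumes ab: "\<alpha> < \<beta>" and ch: "continuous_on {\<alpha>..\<beta>} h" and ih: "integral {\<alpha>..\<beta>} h = 0"
  obtains \<phi> \<phi>' U where "open U" "{\<alpha>..\<beta>} \<subseteq> U" "\<forall>t\<in>U. (\<phi> has_real_derivative \<phi>' t) (at t)"
    "continuous_on U \<phi>'" "\<phi> \<alpha> = 0" "\<phi> \<beta> = 0" "\<forall>t\<in>{\<alpha>..\<beta>}. \<phi>' t = h t"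
proof -
  define \<phi>' where "\<phi>' t = h (max \<alpha> (min \<beta> t))" for t
  have c\<phi>': "continuous_on UNIV \<phi>'"
    unfolding \<phi>'_def by (rule continuous_on_compose2[OF ch]) (use ab in \<open>auto intro!: continuous_intros\<close>)
  define \<phi> where "\<phi> t = integral {\<alpha> - 1..t} \<phi>' - integral {\<alpha> - 1..\<alpha>} \<phi>'" for t
  have d\<phi>: "(\<phi> has_real_derivative \<phi>' s) (at s)" if s: "s \<in> {\<alpha> - 1<..<\<beta> + 1}" for s
  proof -
    have "s \<in> {\<alpha> - 1..\<beta> + 1}" using s by simp
    from integral_has_vector_derivative[OF continuous_on_subset[OF c\<phi>' subset_UNIV] this]
    have "((\<lambda>u. integral {\<alpha> - 1..u} \<phi>') has_real_derivative \<phi>' s) (at s within {\<alpha> - 1..\<beta> + 1})"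
      by (simp add: has_real_derivative_iff_has_vector_derivative)
    then have "((\<lambda>u. integral {\<alpha> - 1..u} \<phi>') has_real_derivative \<phi>' s) (at s)"
      using s at_within_interior[of s "{\<alpha> - 1..\<beta> + 1}"] by simp
    then show ?thesis unfolding \<phi>_def by (rule DERIV_diff[OF _ DERIV_const, simplified])
  qed
  have "integral {\<alpha> - 1..\<alpha>} \<phi>' + integral {\<alpha>..\<beta>} \<phi>' = integral {\<alpha> - 1..\<beta>} \<phi>'"
    using ab by (intro Henstock_Kurzweil_Integration.integral_combine)
      (auto intro!: integrable_continuous_interval continuous_on_subset[OF c\<phi>'])
  moreover have "integral {\<alpha>..\<beta>} \<phi>' = 0"
    using ih by (metis (no_types, lifting) \<phi>'_def atLeastAtMost_iff integral_cong max.absorb2 min.absorb2)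
  ultimately have "\<phi> \<beta> = 0" by (simp add: \<phi>_def)
  moreover have "\<phi> \<alpha> = 0" by (simp add: \<phi>_def)
  moreover have "\<forall>t\<in>{\<alpha>..\<beta>}. \<phi>' t = h t" by (simp add: \<phi>'_def)
  ultimately show ?thesis
    by (intro that[of "{\<alpha> - 1<..<\<beta> + 1}" \<phi> \<phi>'])
      (use d\<phi> continuous_on_subset[OF c\<phi>'] in auto)
qed

lemma du_Bois_Reymond:
  fixes a b :: "real \<Rightarrow> real"
  assumes ab: "\<alpha> < \<beta>" and ca: "continuous_on {\<alpha>..\<beta>} a" and cb: "continuous_on {\<alpha>..\<beta>} b"
    and H: "\<And>\<phi> \<phi>' U. open U \<Longrightarrow> {\<alpha>..\<beta>} \<subseteq> U \<Longrightarrow> (\<forall>t\<in>U. (\<phi> has_real_derivative \<phi>' t) (at t))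
       \<Longrightarrow> continuous_on U \<phi>' \<Longrightarrow> \<phi> \<alpha> = 0 \<Longrightarrow> \<phi> \<beta> = 0
       \<Longrightarrow> integral {\<alpha>..\<beta>} (\<lambda>t. \<phi> t * a t + \<phi>' t * b t) = 0"
    and t: "t \<in> {\<alpha>..\<beta>}"
  shows "(b has_real_derivative a t) (at t within {\<alpha>..\<beta>})"
proof -
  let ?I = "{\<alpha>..\<beta>}"
  define Aa where "Aa t = integral {\<alpha>..t} a" for t
  have dA: "(Aa has_real_derivative a t) (at t within ?I)" if "t \<in> ?I" for t
    using integral_has_vector_derivative[OF ca that] unfolding Aa_def
    by (simp add: has_real_derivative_iff_has_vector_derivative)
  have cA: "continuous_on ?I Aa" by (rule DERIV_within_continuous_on[OF dA])
  define c where "c = integral ?I (\<lambda>t. b t - Aa t) / (\<beta> - \<alpha>)"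
  define h where "h t = b t - Aa t - c" for t
  have ch: "continuous_on ?I h" unfolding h_def by (intro continuous_intros cb cA)
  have "integral ?I h = integral ?I (\<lambda>t. b t - Aa t) - integral ?I (\<lambda>t. c)"
    unfolding h_def by (intro integral_diff integrable_continuous_interval continuous_intros cb cA)
  then have ih: "integral ?I h = 0" using ab by (simp add: c_def)
  obtain \<phi> \<phi>' U where U: "open U" "?I \<subseteq> U" and d\<phi>: "\<forall>t\<in>U. (\<phi> has_real_derivative \<phi>' t) (at t)"
    and c\<phi>': "continuous_on U \<phi>'" and \<phi>0: "\<phi> \<alpha> = 0" "\<phi> \<beta> = 0" and \<phi>'h: "\<forall>t\<in>?I. \<phi>' t = h t"
    by (rule mean_zero_test_function[OF ab ch ih])
  have d\<phi>I: "(\<phi> has_real_derivative h s) (at s within ?I)" if "s \<in> ?I" for s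
    using d\<phi> \<phi>'h U(2) that by (metis has_field_derivative_at_within subsetD)
  have c\<phi>: "continuous_on ?I \<phi>" by (rule DERIV_within_continuous_on[OF d\<phi>I])
  have "integral ?I (\<lambda>t. \<phi> t * a t + \<phi>' t * b t) = integral ?I (\<lambda>t. \<phi> t * a t + h t * b t)"
    using \<phi>'h by (intro integral_cong) simp
  then have "0 = integral ?I (\<lambda>t. \<phi> t * a t + h t * b t)"
    using H[OF U d\<phi> c\<phi>' \<phi>0] by simp
  also have "\<dots> = integral ?I (\<lambda>t. \<phi> t * a t) + integral ?I (\<lambda>t. h t * b t)"
    by (intro integral_add integrable_continuous_interval continuous_intros ca cb c\<phi> ch)
  also have "integral ?I (\<lambda>t. \<phi> t * a t) = - integral ?I (\<lambda>t. h t * Aa t)"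
    unfolding Aa_def by (rule integral_by_parts_boundary_zero[OF ab ca d\<phi>I ch \<phi>0])
  also have "- integral ?I (\<lambda>t. h t * Aa t) + integral ?I (\<lambda>t. h t * b t)
      = integral ?I (\<lambda>t. h t * b t - h t * Aa t)"
    by (simp add: integral_diff integrable_continuous_interval continuous_intros ca cb cA ch)
  also have "\<dots> = integral ?I (\<lambda>t. h t * h t + c * h t)"
    by (intro integral_cong) (simp add: h_def algebra_simps)
  also have "\<dots> = integral ?I (\<lambda>t. h t * h t) + c * integral ?I h"
    by (simp add: integral_add integrable_continuous_interval continuous_intros ch)
  finally have "integral ?I (\<lambda>t. h t * h t) = 0" using ih by simp
  then have "\<forall>s\<in>?I. h s * h s = 0"
    using integral_eq_0_iff[of \<alpha> \<beta> "\<lambda>t. h t * h t"] ab ch by (simp add: continuous_on_mult)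
  then have b_eq: "\<And>s. s \<in> ?I \<Longrightarrow> Aa s + c = b s" by (fastforce simp: h_def)
  have "((\<lambda>s. Aa s + c) has_real_derivative a t) (at t within ?I)"
    using DERIV_add[OF dA[OF t] DERIV_const[of c]] by simp
  then show ?thesis
    by (rule has_field_derivative_transform_within[OF _ zero_less_one t]) (use b_eq in simp)
qed

lemma integral_diff_quotient_tendsto:
  fixes F :: "real \<Rightarrow> real \<Rightarrow> real" and \<Phi> :: "real \<times> real \<Rightarrow> real"
  assumes ab: "\<alpha> < \<beta>" and \<delta>: "\<delta> > 0"
    and c\<Phi>: "continuous_on ({\<alpha>..\<beta>} \<times> {-\<delta>..\<delta>}) \<Phi>"
    and cF: "\<And>s. \<bar>s\<bar> \<le> \<delta> \<Longrightarrow> continuous_on {\<alpha>..\<beta>} (F s)"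
    and mvt: "\<And>s t. t \<in> {\<alpha>..\<beta>} \<Longrightarrow> \<bar>s\<bar> \<le> \<delta> \<Longrightarrow> \<exists>\<theta>. \<bar>\<theta>\<bar> \<le> \<bar>s\<bar> \<and> F s t - F 0 t = s * \<Phi> (t, \<theta>)"
  shows "((\<lambda>s. (integral {\<alpha>..\<beta>} (F s) - integral {\<alpha>..\<beta>} (F 0)) / s)
           \<longlongrightarrow> integral {\<alpha>..\<beta>} (\<lambda>t. \<Phi> (t, 0))) (at 0)"
proof (rule tendstoI)
  let ?I = "{\<alpha>..\<beta>}" and ?K = "{\<alpha>..\<beta>} \<times> {-\<delta>..\<delta>}"
  fix e :: real assume e: "e > 0"
  have "uniformly_continuous_on ?K \<Phi>"
    by (rule compact_uniformly_continuous[OF c\<Phi>]) (auto intro: compact_Times)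
  moreover have \<epsilon>: "e / 2 / (\<beta> - \<alpha>) > 0" using e ab by simp
  ultimately obtain d where d: "d > 0"
    "\<And>p p'. p \<in> ?K \<Longrightarrow> p' \<in> ?K \<Longrightarrow> dist p' p < d \<Longrightarrow> dist (\<Phi> p') (\<Phi> p) < e / 2 / (\<beta> - \<alpha>)"
    unfolding uniformly_continuous_on_def by metis
  have c\<Phi>0: "continuous_on ?I (\<lambda>t. \<Phi> (t, 0))"
    by (rule continuous_on_compose2[OF c\<Phi>]) (use \<delta> in \<open>auto intro!: continuous_intros\<close>)
  show "\<forall>\<^sub>F s in at 0. dist ((integral ?I (F s) - integral ?I (F 0)) / s) (integral ?I (\<lambda>t. \<Phi> (t, 0))) < e"
    unfolding eventually_at
  proof (intro exI[of _ "min d \<delta>"] conjI ballI impI)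
    show "0 < min d \<delta>" using d \<delta> by simp
  next
    fix s :: real assume s: "s \<noteq> 0 \<and> dist s 0 < min d \<delta>"
    then have sd: "\<bar>s\<bar> \<le> \<delta>" by simp
    have cq: "continuous_on ?I (\<lambda>t. (F s t - F 0 t) / s - \<Phi> (t, 0))"
      using cF[OF sd] cF[of 0] \<delta> s by (intro continuous_intros c\<Phi>0) auto
    have eq: "(integral ?I (F s) - integral ?I (F 0)) / s - integral ?I (\<lambda>t. \<Phi> (t, 0))
        = integral ?I (\<lambda>t. (F s t - F 0 t) / s - \<Phi> (t, 0))"
    proof -
      have i: "F s integrable_on ?I" "F 0 integrable_on ?I" "(\<lambda>t. \<Phi> (t, 0)) integrable_on ?I"
        using cF[OF sd] cF[of 0] \<delta> c\<Phi>0 by (auto intro: integrable_continuous_interval)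
      then have "(\<lambda>t. (F s t - F 0 t) / s) integrable_on ?I"
        by (intro integrable_on_divide integrable_diff)
      with i show ?thesis
        by (simp add: integral_diff integral_divide)
    qed
    have "norm (integral ?I (\<lambda>t. (F s t - F 0 t) / s - \<Phi> (t, 0))) \<le> e / 2 / (\<beta> - \<alpha>) * (\<beta> - \<alpha>)"
    proof (rule integral_bound[OF _ cq])
      show "\<alpha> \<le> \<beta>" using ab by simp
      fix t assume t: "t \<in> ?I"
      obtain \<theta> where th: "\<bar>\<theta>\<bar> \<le> \<bar>s\<bar>" "F s t - F 0 t = s * \<Phi> (t, \<theta>)"
        using mvt[OF t sd] by blast
      have "dist (\<Phi> (t, \<theta>)) (\<Phi> (t, 0)) < e / 2 / (\<beta> - \<alpha>)"
        using t th(1) sd s by (intro d(2)) (auto simp: dist_Pair_Pair dist_real_def)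
      then show "norm ((F s t - F 0 t) / s - \<Phi> (t, 0)) \<le> e / 2 / (\<beta> - \<alpha>)"
        using th(2) s by (simp add: dist_real_def)
    qed
    also have "\<dots> = e / 2" using ab by (simp add: field_simps)
    finally show "dist ((integral ?I (F s) - integral ?I (F 0)) / s) (integral ?I (\<lambda>t. \<Phi> (t, 0))) < e"
      using eq e by (simp add: dist_real_def)
  qed
qed

section \<open>Directional derivatives of \<open>C\<^sup>1\<close> maps\<close>

lemma dd_eqI: "has_dirderiv f v \<xi> d \<Longrightarrow> dd f v \<xi> = d"
  unfolding has_dirderiv_def dd_def by (rule tendsto_Lim) auto

lemma C1_has_dirderiv: "C1 U f \<Longrightarrow> v \<in> U \<Longrightarrow> has_dirderiv f v \<xi> (dd f v \<xi>)"
  unfolding C1_def using dd_eqI by metis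

lemma has_dirderiv_zero: "has_dirderiv f v 0 0"
  unfolding has_dirderiv_def by simp

lemma dd_zero: "dd f v 0 = 0"
  by (rule dd_eqI[OF has_dirderiv_zero])

lemma has_dirderiv_line_DERIV:
  fixes G :: "'e::real_vector \<Rightarrow> real"
  assumes "has_dirderiv G (p + s *\<^sub>R w) w d"
  shows "((\<lambda>\<sigma>. G (p + \<sigma> *\<^sub>R w)) has_real_derivative d) (at s)"
proof -
  have "((\<lambda>h. (1/h) *\<^sub>R (G ((p + s *\<^sub>R w) + h *\<^sub>R w) - G (p + s *\<^sub>R w))) \<longlongrightarrow> d) (at 0)"
    using assms unfolding has_dirderiv_def .
  moreover have "\<And>h. (1/h) *\<^sub>R (G ((p + s *\<^sub>R w) + h *\<^sub>R w) - G (p + s *\<^sub>R w))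
      = (G (p + (s + h) *\<^sub>R w) - G (p + s *\<^sub>R w)) / h"
    by (simp add: add.assoc scaleR_add_left add.commute[of "h *\<^sub>R w"] divide_inverse mult.commute)
  ultimately show ?thesis unfolding DERIV_def
    by (simp add: algebra_simps scaleR_add_left diff_divide_distrib)
qed

lemma C1_line_DERIV:
  fixes G :: "'e::{real_vector,topological_space} \<Rightarrow> real"
  assumes "C1 W G" "p + s *\<^sub>R w \<in> W"
  shows "((\<lambda>\<sigma>. G (p + \<sigma> *\<^sub>R w)) has_real_derivative dd G (p + s *\<^sub>R w) w) (at s)"
  by (rule has_dirderiv_line_DERIV[OF C1_has_dirderiv[OF assms]])

lemma C1_MVT:
  fixes G :: "'e::{real_vector,topological_space} \<Rightarrow> real"
  assumes "C1 W G" "\<And>\<sigma>. \<bar>\<sigma>\<bar> \<le> \<bar>t\<bar> \<Longrightarrow> p + \<sigma> *\<^sub>R w \<in> W"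
  shows "\<exists>\<theta>. \<bar>\<theta>\<bar> \<le> \<bar>t\<bar> \<and> G (p + t *\<^sub>R w) - G p = t * dd G (p + \<theta> *\<^sub>R w) w"
  using MVT_abs[of t "\<lambda>\<sigma>. G (p + \<sigma> *\<^sub>R w)" "\<lambda>\<sigma>. dd G (p + \<sigma> *\<^sub>R w) w"]
    C1_line_DERIV[OF assms(1) assms(2)] by simp

lemma C1_isCont_dd:
  assumes "C1 W G" "p \<in> W"
  shows "isCont (\<lambda>q. dd G (fst q) (snd q)) (p, w)"
proof -
  have o: "open (W \<times> (UNIV::'a set))" using assms(1) unfolding C1_def by (auto intro: open_Times)
  have "continuous_on (W \<times> UNIV) (\<lambda>q. dd G (fst q) (snd q))"
    using assms(1) unfolding C1_def by (simp add: case_prod_beta)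
  then show ?thesis using continuous_on_eq_continuous_at[OF o] assms(2) by auto
qed

lemma C1_segment_nbhd:
  fixes G :: "'e::{real_vector,t2_space} \<Rightarrow> real"
  assumes tvs: "tvs TYPE('e)" and C: "C1 W G" and p: "p \<in> W" and e: "e > 0"
  obtains V where "open V" "0 \<in> V"
    "\<And>u \<sigma>. u \<in> V \<Longrightarrow> \<bar>\<sigma>\<bar> \<le> 1 \<Longrightarrow> p + \<sigma> *\<^sub>R u \<in> W \<and> \<bar>dd G (p + \<sigma> *\<^sub>R u) u\<bar> < e"
proof -
  define \<Psi> where "\<Psi> q = (p + snd q *\<^sub>R fst q, fst q)" for q :: "'e \<times> real"
  have c\<Psi>: "continuous_on UNIV \<Psi>"
    unfolding \<Psi>_def continuous_on_def
    by (intro ballI tendsto_Pair tvs_tendsto_add[OF tvs] tvs_tendsto_scaleR[OF tvs] tendsto_const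
      tendsto_fst tendsto_snd tendsto_ident_at)
  have "continuous_on (W \<times> UNIV) (\<lambda>q. dd G (fst q) (snd q))"
    using C unfolding C1_def by (simp add: case_prod_beta)
  then have "continuous_on (\<Psi> -` (W \<times> UNIV)) (\<lambda>q. dd G (fst (\<Psi> q)) (snd (\<Psi> q)))"
    by (rule continuous_on_compose2) (auto intro: continuous_on_subset[OF c\<Psi>])
  moreover have "open (\<Psi> -` (W \<times> UNIV))"
    using C by (intro open_vimage[OF _ c\<Psi>] open_Times) (auto simp: C1_def)
  ultimately have O: "open (\<Psi> -` (W \<times> UNIV) \<inter> (\<lambda>q. dd G (fst (\<Psi> q)) (snd (\<Psi> q))) -` ball 0 e)"
    (is "open ?O") by (rule continuous_open_preimage[OF _ _ open_ball])
  have "(0, \<sigma>) \<in> ?O" for \<sigma> :: real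
    using p e by (simp add: \<Psi>_def dd_zero)
  then have "{0} \<times> {-1..1} \<subseteq> ?O" by auto
  then have "\<exists>V. 0 \<in> V \<and> open V \<and> V \<times> {-1..1::real} \<subseteq> ?O"
    by (rule Elementary_Topology.tube_lemma[OF compact_Icc O])
  then obtain V where V: "0 \<in> V" "open V" "V \<times> {-1..1::real} \<subseteq> ?O" by blast
  show ?thesis
  proof (rule that[OF V(2,1)])
    fix u and \<sigma> :: real assume "u \<in> V" "\<bar>\<sigma>\<bar> \<le> 1"
    then have "(u, \<sigma>) \<in> V \<times> {-1..1}" by (simp add: abs_le_iff)
    then have "(u, \<sigma>) \<in> ?O" using V(3) by (rule subsetD[rotated])
    then show "p + \<sigma> *\<^sub>R u \<in> W \<and> \<bar>dd G (p + \<sigma> *\<^sub>R u) u\<bar> < e" by (simp add: \<Psi>_def)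
  qed
qed

lemma C1_isCont:
  fixes G :: "'e::{real_vector,t2_space} \<Rightarrow> real"
  assumes tvs: "tvs TYPE('e)" and C: "C1 W G" and p: "p \<in> W"
  shows "isCont G p"
  unfolding continuous_at
proof (rule tendstoI)
  fix e :: real assume e: "e > 0"
  obtain V where V: "open V" "0 \<in> V"
    "\<And>u \<sigma>. u \<in> V \<Longrightarrow> \<bar>\<sigma>\<bar> \<le> 1 \<Longrightarrow> p + \<sigma> *\<^sub>R u \<in> W \<and> \<bar>dd G (p + \<sigma> *\<^sub>R u) u\<bar> < e"
    by (rule C1_segment_nbhd[OF tvs C p e]) blast
  have "continuous_on UNIV (\<lambda>x::'e. x - p)"
    unfolding continuous_on_def by (intro ballI tvs_tendsto_diff[OF tvs] tendsto_const tendsto_ident_at)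
  then have "open {x. x - p \<in> V}" using open_vimage[OF V(1)] by (simp add: vimage_def)
  moreover have "p \<in> {x. x - p \<in> V}" using V(2) by simp
  moreover have "dist (G x) (G p) < e" if xV: "x - p \<in> V" for x
  proof -
    have "p + \<sigma> *\<^sub>R (x - p) \<in> W" if "\<bar>\<sigma>\<bar> \<le> \<bar>1\<bar>" for \<sigma>
      using V(3)[OF xV, of \<sigma>] that by simp
    from C1_MVT[OF C this] obtain \<theta> where
      \<theta>: "\<bar>\<theta>\<bar> \<le> \<bar>1\<bar>" "G (p + 1 *\<^sub>R (x - p)) - G p = 1 * dd G (p + \<theta> *\<^sub>R (x - p)) (x - p)"
      by blast
    then show ?thesis using V(3)[OF xV, of \<theta>] by (simp add: dist_real_def)
  qed
  ultimately show "\<forall>\<^sub>F x in at p. dist (G x) (G p) < e"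
    unfolding eventually_at_topological by (intro exI[of _ "{x. x - p \<in> V}"]) simp
qed

lemma C1_continuous_on:
  fixes G :: "'e::{real_vector,t2_space} \<Rightarrow> real"
  assumes "tvs TYPE('e)" "C1 W G"
  shows "continuous_on W G"
  using C1_isCont[OF assms] by (intro continuous_at_imp_continuous_on) auto

text \<open>The mean value theorem on the segments from \<open>b h\<close> to \<open>b h + h w h\<close> writes the
  quotient as a value of \<open>dd G\<close>, whose continuity replaces a chain rule.\<close>

lemma C1_chain_moving_base:
  fixes G :: "'e::{real_vector,t2_space} \<Rightarrow> real" and b w :: "real \<Rightarrow> 'e"
  assumes tvs: "tvs TYPE('e)" and C: "C1 W G"
    and cb: "isCont b 0" and cw: "isCont w 0" and b0: "b 0 \<in> W"
  shows "((\<lambda>h. (G (b h + h *\<^sub>R w h) - G (b h)) / h) \<longlongrightarrow> dd G (b 0) (w 0)) (at 0)"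
proof -
  have oW: "open W" using C unfolding C1_def by auto
  have fst0: "((\<lambda>q::real\<times>real. fst q) \<longlongrightarrow> 0) (at (0,0))"
    using tendsto_fst[OF tendsto_ident_at[of "(0::real,0::real)" UNIV]] by simp
  have wf: "((\<lambda>q::real\<times>real. w (fst q)) \<longlongrightarrow> w 0) (at (0,0))"
    using isCont_tendsto_compose[OF cw fst0] by simp
  have bf: "((\<lambda>q::real\<times>real. b (fst q)) \<longlongrightarrow> b 0) (at (0,0))"
    using isCont_tendsto_compose[OF cb fst0] by simp
  have cl: "isCont (\<lambda>q::real\<times>real. b (fst q) + snd q *\<^sub>R w (fst q)) (0,0)"
    unfolding continuous_at using tvs_tendsto_add[OF tvs bf tvs_tendsto_scaleR[OF tvs tendsto_snd[OF tendsto_ident_at] wf]]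
    by simp
  define H where "H = (\<lambda>h \<sigma>. G (b h + \<sigma> *\<^sub>R w h))"
  define \<Phi> where "\<Phi> = (\<lambda>q::real\<times>real. dd G (b (fst q) + snd q *\<^sub>R w (fst q)) (w (fst q)))"
  have cont: "isCont \<Phi> (0,0)"
  proof -
    have "isCont (\<lambda>q::real\<times>real. (b (fst q) + snd q *\<^sub>R w (fst q), w (fst q))) (0,0)"
      using cl wf unfolding continuous_at by (intro tendsto_Pair) auto
    moreover have "isCont (\<lambda>q. dd G (fst q) (snd q))
        ((\<lambda>q::real\<times>real. (b (fst q) + snd q *\<^sub>R w (fst q), w (fst q))) (0,0))"
      using C1_isCont_dd[OF C b0] by simp
    ultimately show ?thesis using isCont_o2 unfolding \<Phi>_def by fastforce
  qed
  obtain d where d: "d > 0" "\<And>h \<sigma>. \<bar>h\<bar> < d \<Longrightarrow> \<bar>\<sigma>\<bar> \<le> \<bar>h\<bar> \<Longrightarrow> b h + \<sigma> *\<^sub>R w h \<in> W"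
    using isCont_eventually_cone[OF cl oW] b0 by auto
  have 2: "((\<lambda>h. (H h h - H h 0) / h) \<longlongrightarrow> \<Phi> (0,0)) (at 0)"
  proof (rule MVT_diff_quotient_tendsto[OF cont])
    show "\<exists>d>0. \<forall>t \<sigma>. \<bar>t\<bar> < d \<longrightarrow> \<bar>\<sigma>\<bar> \<le> \<bar>t\<bar> \<longrightarrow> (H t has_real_derivative \<Phi> (t, \<sigma>)) (at \<sigma>)"
      using d unfolding H_def \<Phi>_def by (auto intro!: C1_line_DERIV[OF C])
  qed
  then show ?thesis by (simp add: H_def \<Phi>_def)
qed

lemma C1_dd_add:
  fixes G :: "'e::{real_vector,t2_space} \<Rightarrow> real"
  assumes tvs: "tvs TYPE('e)" and C: "C1 W G" and p: "p \<in> W"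
  shows "dd G p (a + b) = dd G p a + dd G p b"
proof (rule dd_eqI)
  have "((\<lambda>t. (G (p + t *\<^sub>R a) - G p) / t) \<longlongrightarrow> dd G p a) (at 0)"
    using C1_has_dirderiv[OF C p, of a] unfolding has_dirderiv_def by (simp add: divide_inverse mult.commute)
  moreover have "((\<lambda>t. (G ((p + t *\<^sub>R a) + t *\<^sub>R b) - G (p + t *\<^sub>R a)) / t) \<longlongrightarrow> dd G p b) (at 0)"
  proof -
    have "isCont (\<lambda>t. p + t *\<^sub>R a) 0"
      unfolding continuous_at by (intro tvs_tendsto_add[OF tvs] tvs_tendsto_scaleR[OF tvs] tendsto_intros)
    from C1_chain_moving_base[OF tvs C this continuous_const] p show ?thesis by simp
  qed
  ultimately have "((\<lambda>t. (G (p + t *\<^sub>R a) - G p) / t + (G ((p + t *\<^sub>R a) + t *\<^sub>R b) - G (p + t *\<^sub>R a)) / t)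
      \<longlongrightarrow> dd G p a + dd G p b) (at 0)"
    by (rule tendsto_add)
  moreover have "(G (p + t *\<^sub>R a) - G p) / t + (G ((p + t *\<^sub>R a) + t *\<^sub>R b) - G (p + t *\<^sub>R a)) / t
      = (1 / t) *\<^sub>R (G (p + t *\<^sub>R (a + b)) - G p)" for t
    by (simp add: scaleR_add_right add.assoc add_divide_distrib[symmetric])
  ultimately show "has_dirderiv G p (a + b) (dd G p a + dd G p b)"
    unfolding has_dirderiv_def by simp
qed

lemma C1_const:
  fixes c :: "'b::{real_vector,t2_space}"
  assumes "open U"
  shows "C1 U (\<lambda>_::'a::{real_vector,topological_space}. c)"
proof -
  have h: "has_dirderiv (\<lambda>_::'a. c) v \<xi> 0" for v \<xi> unfolding has_dirderiv_def by simp
  have "dd (\<lambda>_::'a. c) v \<xi> = 0" for v \<xi> by (rule dd_eqI[OF h])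
  then show ?thesis unfolding C1_def using assms h by (auto simp: case_prod_beta intro: exI[of _ 0])
qed

section \<open>Velocities of curves\<close>

definition has_velocity :: "(real \<Rightarrow> 'e::{real_vector,topological_space}) \<Rightarrow> real \<Rightarrow> 'e \<Rightarrow> bool" where
  "has_velocity f t d \<longleftrightarrow> ((\<lambda>s. (1 / (s - t)) *\<^sub>R (f s - f t)) \<longlongrightarrow> d) (at t)"

lemma has_velocity_iff_at_0:
  "has_velocity f t d \<longleftrightarrow> ((\<lambda>h. (1/h) *\<^sub>R (f (t + h) - f t)) \<longlongrightarrow> d) (at 0)"
  unfolding has_velocity_def
  using LIM_offset_zero[of "\<lambda>s. (1 / (s - t)) *\<^sub>R (f s - f t)" d t]
    LIM_offset_zero_cancel[of "\<lambda>s. (1 / (s - t)) *\<^sub>R (f s - f t)" t d]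
  by auto

lemma C1_chain:
  fixes G :: "'e::{real_vector,t2_space} \<Rightarrow> real" and c :: "real \<Rightarrow> 'e"
  assumes tvs: "tvs TYPE('e)" and C: "C1 W G" and dc: "has_velocity c t c'" and ct: "c t \<in> W"
  shows "((\<lambda>s. G (c s)) has_real_derivative dd G (c t) c') (at t)"
proof -
  define w where "w = (\<lambda>h::real. if h = 0 then c' else (1/h) *\<^sub>R (c (t + h) - c t))"
  have "\<forall>\<^sub>F h in at 0. (1/h) *\<^sub>R (c (t + h) - c t) = w h"
    unfolding eventually_at by (intro exI[of _ 1]) (auto simp: w_def)
  from Lim_transform_eventually[OF dc[unfolded has_velocity_iff_at_0] this] have "isCont w 0"
    unfolding continuous_at by (simp add: w_def)
  from C1_chain_moving_base[OF tvs C continuous_const this] ct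
  have "((\<lambda>h. (G (c t + h *\<^sub>R w h) - G (c t)) / h) \<longlongrightarrow> dd G (c t) c') (at 0)"
    by (simp add: w_def)
  moreover have "\<forall>\<^sub>F h in at (0::real). (G (c t + h *\<^sub>R w h) - G (c t)) / h = (G (c (t + h)) - G (c t)) / h"
    unfolding eventually_at by (intro exI[of _ 1]) (auto simp: w_def)
  ultimately show ?thesis
    unfolding DERIV_def by (rule Lim_transform_eventually)
qed

lemma has_velocity_isCont:
  fixes f :: "real \<Rightarrow> 'e::{real_vector,t2_space}"
  assumes tvs: "tvs TYPE('e)" and "has_velocity f t d"
  shows "isCont f t"
proof -
  have 1: "((\<lambda>h. h *\<^sub>R ((1/h) *\<^sub>R (f (t + h) - f t))) \<longlongrightarrow> 0 *\<^sub>R d) (at 0)"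
    using assms(2) unfolding has_velocity_iff_at_0 by (rule tvs_tendsto_scaleR[OF tvs tendsto_ident_at])
  have "\<forall>\<^sub>F h in at (0::real). h *\<^sub>R ((1/h) *\<^sub>R (f (t + h) - f t)) = f (t + h) - f t"
    unfolding eventually_at by (intro exI[of _ 1]) auto
  from Lim_transform_eventually[OF 1 this]
  have "((\<lambda>h. f (t + h) - f t) \<longlongrightarrow> 0) (at 0)" by simp
  from tvs_tendsto_add[OF tvs this tendsto_const[of "f t"]]
  have "((\<lambda>h. f (t + h)) \<longlongrightarrow> f t) (at 0)" by simp
  then show "isCont f t" unfolding continuous_at by (rule LIM_offset_zero_cancel)
qed

lemma has_velocity_within:
  assumes "has_velocity f t d" "t \<in> S" "\<forall>s\<in>S. f s = x s"
  shows "((\<lambda>s. (1 / (s - t)) *\<^sub>R (x s - x t)) \<longlongrightarrow> d) (at t within S)"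
proof -
  have "((\<lambda>s. (1 / (s - t)) *\<^sub>R (f s - f t)) \<longlongrightarrow> d) (at t within S)"
    using assms(1) unfolding has_velocity_def by (rule tendsto_within_subset) simp
  moreover have "\<forall>\<^sub>F s in at t within S. (1 / (s - t)) *\<^sub>R (f s - f t) = (1 / (s - t)) *\<^sub>R (x s - x t)"
    unfolding eventually_at_topological using assms(2,3) by (intro exI[of _ UNIV]) auto
  ultimately show ?thesis by (rule Lim_transform_eventually)
qed

lemma vel_eqI:
  assumes "\<alpha> < \<beta>" "t \<in> {\<alpha>..\<beta>}"
    "((\<lambda>s. (1 / (s - t)) *\<^sub>R (x s - x t)) \<longlongrightarrow> v) (at t within {\<alpha>..\<beta>})"
  shows "vel \<alpha> \<beta> x t = v"
  unfolding vel_def by (rule tendsto_Lim[OF at_within_Icc_neq_bot[OF assms(1,2)] assms(3)])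

lemma has_velocity_vel:
  assumes "\<alpha> < \<beta>" "has_velocity f t d" "t \<in> {\<alpha>..\<beta>}" "\<forall>s\<in>{\<alpha>..\<beta>}. f s = x s"
  shows "vel \<alpha> \<beta> x t = d"
  by (rule vel_eqI[OF assms(1,3) has_velocity_within[OF assms(2-4)]])

lemma C1_has_velocity:
  fixes y :: "real \<Rightarrow> 'v::{real_vector,t2_space}"
  assumes "C1 U y" "t \<in> U"
  shows "has_velocity y t (dd y t 1)"
  using C1_has_dirderiv[OF assms, of 1] unfolding has_dirderiv_def has_velocity_iff_at_0 by simp

lemma C1_continuous_on_real:
  fixes y :: "real \<Rightarrow> 'v::{real_vector,t2_space}"
  assumes tvs: "tvs TYPE('v)" and C: "C1 U y"
  shows "continuous_on U y"
  using has_velocity_isCont[OF tvs C1_has_velocity[OF C]] by (blast intro: continuous_at_imp_continuous_on)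

lemma C1_continuous_on_dd:
  fixes y :: "real \<Rightarrow> 'v::{real_vector,t2_space}"
  assumes "C1 U y"
  shows "continuous_on U (\<lambda>t. dd y t 1)"
proof -
  have "continuous_on (U \<times> UNIV) (\<lambda>q. dd y (fst q) (snd q))"
    using assms unfolding C1_def by (simp add: case_prod_beta)
  then have "continuous_on U (\<lambda>t. dd y (fst (t, 1::real)) (snd (t, 1::real)))"
    by (rule continuous_on_compose2) (auto intro!: continuous_intros)
  then show ?thesis by simp
qed

lemma C1_extension_vel:
  fixes y x :: "real \<Rightarrow> 'v::{real_vector,t2_space}"
  assumes "\<alpha> < \<beta>" "C1 U y" "{\<alpha>..\<beta>} \<subseteq> U" "\<forall>t\<in>{\<alpha>..\<beta>}. y t = x t" "t \<in> {\<alpha>..\<beta>}"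
  shows "vel \<alpha> \<beta> x t = dd y t 1"
  by (rule has_velocity_vel[OF assms(1) C1_has_velocity[OF assms(2)]]) (use assms in auto)

lemma vel_add_scaleR:
  fixes x y :: "real \<Rightarrow> 'v::{real_vector,t2_space}"
  assumes tvs: "tvs TYPE('v)" and ab: "\<alpha> < \<beta>"
    and x: "C1_curve S \<alpha> \<beta> x" and y: "C1_curve T \<alpha> \<beta> y" and t: "t \<in> {\<alpha>..\<beta>}"
  shows "vel \<alpha> \<beta> (\<lambda>t. x t + c *\<^sub>R y t) t = vel \<alpha> \<beta> x t + c *\<^sub>R vel \<alpha> \<beta> y t"
proof -
  obtain U X where X: "{\<alpha>..\<beta>} \<subseteq> U" "C1 U X" "\<forall>t\<in>{\<alpha>..\<beta>}. X t = x t"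
    using x unfolding C1_curve_def by blast
  obtain U' Y where Y: "{\<alpha>..\<beta>} \<subseteq> U'" "C1 U' Y" "\<forall>t\<in>{\<alpha>..\<beta>}. Y t = y t"
    using y unfolding C1_curve_def by blast
  have "((\<lambda>s. (1 / (s - t)) *\<^sub>R (x s - x t) + c *\<^sub>R ((1 / (s - t)) *\<^sub>R (y s - y t)))
      \<longlongrightarrow> dd X t 1 + c *\<^sub>R dd Y t 1) (at t within {\<alpha>..\<beta>})"
    using X Y t by (intro tvs_tendsto_add[OF tvs] tvs_tendsto_scaleR[OF tvs] tendsto_const
        has_velocity_within[OF C1_has_velocity]) auto
  moreover have "\<And>s. (1 / (s - t)) *\<^sub>R (x s - x t) + c *\<^sub>R ((1 / (s - t)) *\<^sub>R (y s - y t))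
     = (1 / (s - t)) *\<^sub>R ((x s + c *\<^sub>R y s) - (x t + c *\<^sub>R y t))"
    by (simp add: algebra_simps)
  ultimately show ?thesis
    using C1_extension_vel[OF ab X(2,1,3) t] C1_extension_vel[OF ab Y(2,1,3) t]
    by (intro vel_eqI[OF ab t]) simp
qed

lemma has_velocity_const: "has_velocity (\<lambda>_. c) t 0"
  unfolding has_velocity_def by simp

lemma C2_curve_imp_C1_curve: "C2_curve S \<alpha> \<beta> x \<Longrightarrow> C1_curve S \<alpha> \<beta> x"
  unfolding C2_curve_def C1_curve_def C2_def by blast

lemma C2_curve_extension:
  assumes "C2_curve S \<alpha> \<beta> x"
  obtains U X X' X'' where "{\<alpha>..\<beta>} \<subseteq> U" "\<forall>t\<in>{\<alpha>..\<beta>}. X t = x t"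
    "\<And>t. t \<in> U \<Longrightarrow> has_velocity X t (X' t)" "\<And>t. t \<in> U \<Longrightarrow> has_velocity X' t (X'' t)"
proof -
  obtain U X where X: "{\<alpha>..\<beta>} \<subseteq> U" "C2 U X" "\<forall>t\<in>{\<alpha>..\<beta>}. X t = x t"
    using assms unfolding C2_curve_def by blast
  have C1: "C1 U X" and C1': "C1 (U \<times> UNIV) (\<lambda>(v, \<xi>). dd X v \<xi>)"
    using X(2) unfolding C2_def by auto
  show ?thesis
  proof (rule that[OF X(1,3) C1_has_velocity[OF C1]])
    fix t assume "t \<in> U"
    with C1_has_dirderiv[OF C1', of "(t, 1)" "(1, 0)"]
    show "has_velocity (\<lambda>t. dd X t 1) t (dd (\<lambda>(v, \<xi>). dd X v \<xi>) (t, 1) (1, 0))"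
      unfolding has_dirderiv_def has_velocity_iff_at_0 by simp
  qed
qed

lemma has_velocity_scaled:
  fixes f :: "real \<Rightarrow> 'e::{real_vector,t2_space}"
  assumes tvs: "tvs TYPE('e)" and v: "has_velocity f t d"
  shows "((\<lambda>h. (1/h) *\<^sub>R (f (t + h * c) - f t)) \<longlongrightarrow> c *\<^sub>R d) (at 0)"
proof (cases "c = 0")
  case True then show ?thesis by simp
next
  case False
  have fl: "filterlim (\<lambda>h::real. h * c) (at 0) (at 0)"
    unfolding filterlim_at
  proof
    show "\<forall>\<^sub>F x in at (0::real). x * c \<in> UNIV \<and> x * c \<noteq> 0"
      unfolding eventually_at using False by (intro exI[of _ 1]) auto
    show "((\<lambda>h::real. h * c) \<longlongrightarrow> 0) (at 0)"
      by (auto intro!: tendsto_eq_intros)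
  qed
  have "((\<lambda>h. (1/(h * c)) *\<^sub>R (f (t + h * c) - f t)) \<longlongrightarrow> d) (at 0)"
    using filterlim_compose[OF v[unfolded has_velocity_iff_at_0] fl] by simp
  from tvs_tendsto_scaleR[OF tvs tendsto_const[of c] this]
  have 1: "((\<lambda>h. c *\<^sub>R ((1/(h * c)) *\<^sub>R (f (t + h * c) - f t))) \<longlongrightarrow> c *\<^sub>R d) (at 0)" .
  have "\<forall>\<^sub>F h in at (0::real). c *\<^sub>R ((1/(h * c)) *\<^sub>R (f (t + h * c) - f t)) = (1/h) *\<^sub>R (f (t + h * c) - f t)"
    unfolding eventually_at using False by (intro exI[of _ 1]) auto
  from Lim_transform_eventually[OF 1 this] show ?thesis .
qed

lemma has_velocity_C1:
  fixes f f' :: "real \<Rightarrow> 'e::{real_vector,t2_space}"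
  assumes tvs: "tvs TYPE('e)" and U: "open U"
    and d: "\<And>t. t \<in> U \<Longrightarrow> has_velocity f t (f' t)" and c: "continuous_on U f'"
  shows "C1 U f" and "\<And>t \<xi>. t \<in> U \<Longrightarrow> dd f t \<xi> = \<xi> *\<^sub>R f' t"
proof -
  have hd: "has_dirderiv f t \<xi> (\<xi> *\<^sub>R f' t)" if "t \<in> U" for t \<xi>
    unfolding has_dirderiv_def using has_velocity_scaled[OF tvs d[OF that], of \<xi>] by simp
  show dd: "dd f t \<xi> = \<xi> *\<^sub>R f' t" if "t \<in> U" for t \<xi> by (rule dd_eqI[OF hd[OF that]])
  have "continuous_on (U \<times> UNIV) (\<lambda>q::real\<times>real. snd q *\<^sub>R f' (fst q))"
    by (intro tvs_continuous_on_scaleR[OF tvs] continuous_on_snd continuous_on_id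
        continuous_on_compose2[OF c continuous_on_fst[OF continuous_on_id]]) auto
  then have "continuous_on (U \<times> UNIV) (\<lambda>(v, \<xi>). dd f v \<xi>)"
    by (rule continuous_on_eq) (auto simp: dd)
  then show "C1 U f" unfolding C1_def using U hd by blast
qed

lemma C1_scaled_velocity:
  fixes f' f'' :: "real \<Rightarrow> 'e::{real_vector,t2_space}"
  assumes tvs: "tvs TYPE('e)" and d: "\<And>t. has_velocity f' t (f'' t)"
    and c': "continuous_on UNIV f'" and c'': "continuous_on UNIV f''"
  shows "C1 (UNIV \<times> UNIV) (\<lambda>q::real \<times> real. snd q *\<^sub>R f' (fst q))" (is "C1 _ ?F")
proof -
  have hd: "has_dirderiv ?F (t, \<xi>) (\<tau>, \<nu>) (\<nu> *\<^sub>R f' t + \<xi> *\<^sub>R (\<tau> *\<^sub>R f'' t))" for t \<xi> \<tau> \<nu>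
  proof -
    have "isCont f' t" using c' by (simp add: continuous_on_eq_continuous_at)
    moreover have "((\<lambda>h::real. t + h * \<tau>) \<longlongrightarrow> t) (at 0)" by (auto intro!: tendsto_eq_intros)
    ultimately have "((\<lambda>h. f' (t + h * \<tau>)) \<longlongrightarrow> f' t) (at 0)" using isCont_tendsto_compose by blast
    then have "((\<lambda>h. \<nu> *\<^sub>R f' (t + h * \<tau>) + \<xi> *\<^sub>R ((1/h) *\<^sub>R (f' (t + h * \<tau>) - f' t)))
        \<longlongrightarrow> \<nu> *\<^sub>R f' t + \<xi> *\<^sub>R (\<tau> *\<^sub>R f'' t)) (at 0)"
      by (intro tvs_tendsto_add[OF tvs] tvs_tendsto_scaleR[OF tvs] tendsto_const has_velocity_scaled[OF tvs d])
    moreover have "\<forall>\<^sub>F h in at (0::real). \<nu> *\<^sub>R f' (t + h * \<tau>) + \<xi> *\<^sub>R ((1/h) *\<^sub>R (f' (t + h * \<tau>) - f' t))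
        = (1/h) *\<^sub>R (?F ((t, \<xi>) + h *\<^sub>R (\<tau>, \<nu>)) - ?F (t, \<xi>))"
      unfolding eventually_at by (intro exI[of _ 1]) (auto simp: algebra_simps)
    ultimately show ?thesis unfolding has_dirderiv_def by (rule Lim_transform_eventually)
  qed
  have "continuous_on UNIV (\<lambda>q::(real\<times>real)\<times>(real\<times>real).
      snd (snd q) *\<^sub>R f' (fst (fst q)) + snd (fst q) *\<^sub>R (fst (snd q) *\<^sub>R f'' (fst (fst q))))"
    by (intro tvs_continuous_on_add[OF tvs] tvs_continuous_on_scaleR[OF tvs]
        continuous_on_snd continuous_on_fst continuous_on_id
        continuous_on_compose2[OF c' continuous_on_fst[OF continuous_on_fst[OF continuous_on_id]]]
        continuous_on_compose2[OF c'' continuous_on_fst[OF continuous_on_fst[OF continuous_on_id]]]) auto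
  moreover have "(\<lambda>(p, w). dd ?F p w) = (\<lambda>q::(real\<times>real)\<times>(real\<times>real).
      snd (snd q) *\<^sub>R f' (fst (fst q)) + snd (fst q) *\<^sub>R (fst (snd q) *\<^sub>R f'' (fst (fst q))))"
    using dd_eqI[OF hd] by (auto simp: case_prod_beta fun_eq_iff)
  ultimately have "continuous_on (UNIV \<times> UNIV) (\<lambda>(p, w). dd ?F p w)" by simp
  then show ?thesis unfolding C1_def by (auto intro!: exI hd simp: open_Times)
qed

lemma has_velocity_C2:
  fixes f f' f'' :: "real \<Rightarrow> 'e::{real_vector,t2_space}"
  assumes tvs: "tvs TYPE('e)" and d: "\<And>t. has_velocity f t (f' t)" and d': "\<And>t. has_velocity f' t (f'' t)"
    and c': "continuous_on UNIV f'" and c'': "continuous_on UNIV f''"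
  shows "C2 UNIV f"
proof -
  have "(\<lambda>(v, \<xi>). dd f v \<xi>) = (\<lambda>q. snd q *\<^sub>R f' (fst q))"
    using has_velocity_C1(2)[OF tvs open_UNIV d c'] by (auto simp: case_prod_beta)
  then show ?thesis
    unfolding C2_def using has_velocity_C1(1)[OF tvs open_UNIV d c'] C1_scaled_velocity[OF tvs d' c' c'']
    by simp
qed

lemma has_velocity_left_right:
  assumes "((\<lambda>s. (1 / (s - t)) *\<^sub>R (f s - f t)) \<longlongrightarrow> d) (at_left t)"
    and "((\<lambda>s. (1 / (s - t)) *\<^sub>R (f s - f t)) \<longlongrightarrow> d) (at_right t)"
  shows "has_velocity f t d"
  using filterlim_sup[OF assms] unfolding has_velocity_def at_eq_sup_left_right .

lemma has_velocity_agree_on: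
  assumes "has_velocity p t d" "t \<in> S" "\<And>s. s \<in> S \<Longrightarrow> f s = p s"
  shows "((\<lambda>s. (1 / (s - t)) *\<^sub>R (f s - f t)) \<longlongrightarrow> d) (at t within S)"
  by (rule has_velocity_within[OF assms(1,2)]) (use assms(3) in simp)

lemma has_velocity_glue:
  fixes f p q d dp dq :: "real \<Rightarrow> 'e::{real_vector,t2_space}"
  assumes ab: "\<alpha> < \<beta>"
    and fI: "\<And>t. t \<in> {\<alpha>..\<beta>} \<Longrightarrow> ((\<lambda>s. (1 / (s - t)) *\<^sub>R (f s - f t)) \<longlongrightarrow> d t) (at t within {\<alpha>..\<beta>})"
    and fp: "\<And>s. s \<le> \<alpha> \<Longrightarrow> f s = p s" and fq: "\<And>s. s \<ge> \<beta> \<Longrightarrow> f s = q s"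
    and dp: "\<And>t. has_velocity p t (dp t)" and dq: "\<And>t. has_velocity q t (dq t)"
    and ea: "dp \<alpha> = d \<alpha>" and eb: "dq \<beta> = d \<beta>"
  shows "has_velocity f t (if t < \<alpha> then dp t else if t > \<beta> then dq t else d t)"
proof -
  consider "t < \<alpha>" | "t > \<beta>" | "\<alpha> < t \<and> t < \<beta>" | "t = \<alpha>" | "t = \<beta>" using ab by linarith
  then show ?thesis
  proof cases
    case 1
    have "((\<lambda>s. (1 / (s - t)) *\<^sub>R (f s - f t)) \<longlongrightarrow> dp t) (at t within {..<\<alpha>})"
      by (rule has_velocity_agree_on[OF dp]) (use 1 fp in auto)
    moreover have "at t within {..<\<alpha>} = at t" using 1 by (intro at_within_open) auto
    ultimately show ?thesis using 1 by (simp add: has_velocity_def)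
  next
    case 2
    have "((\<lambda>s. (1 / (s - t)) *\<^sub>R (f s - f t)) \<longlongrightarrow> dq t) (at t within {\<beta><..})"
      by (rule has_velocity_agree_on[OF dq]) (use 2 fq in auto)
    moreover have "at t within {\<beta><..} = at t" using 2 by (intro at_within_open) auto
    ultimately show ?thesis using 2 ab by (simp add: has_velocity_def)
  next
    case 3
    then have "at t within {\<alpha>..\<beta>} = at t" by (intro at_within_Icc_at) auto
    then show ?thesis using fI[of t] 3 by (simp add: has_velocity_def)
  next
    case 4
    have "((\<lambda>s. (1 / (s - t)) *\<^sub>R (f s - f t)) \<longlongrightarrow> dp t) (at t within {..t})"
      by (rule has_velocity_agree_on[OF dp]) (use 4 fp in auto)
    then have "((\<lambda>s. (1 / (s - t)) *\<^sub>R (f s - f t)) \<longlongrightarrow> d t) (at t within {..t})"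
      using 4 ea by simp
    then have "((\<lambda>s. (1 / (s - t)) *\<^sub>R (f s - f t)) \<longlongrightarrow> d t) (at_left t)"
      by (rule tendsto_within_subset) auto
    moreover have "((\<lambda>s. (1 / (s - t)) *\<^sub>R (f s - f t)) \<longlongrightarrow> d t) (at_right t)"
      using fI[of t] 4 at_within_Icc_at_right[OF ab] ab by simp
    ultimately show ?thesis using 4 ab by (simp add: has_velocity_left_right)
  next
    case 5
    have "((\<lambda>s. (1 / (s - t)) *\<^sub>R (f s - f t)) \<longlongrightarrow> dq t) (at t within {t..})"
      by (rule has_velocity_agree_on[OF dq]) (use 5 fq in auto)
    then have "((\<lambda>s. (1 / (s - t)) *\<^sub>R (f s - f t)) \<longlongrightarrow> d t) (at t within {t..})"
      using 5 eb by simp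
    then have "((\<lambda>s. (1 / (s - t)) *\<^sub>R (f s - f t)) \<longlongrightarrow> d t) (at_right t)"
      by (rule tendsto_within_subset) auto
    moreover have "((\<lambda>s. (1 / (s - t)) *\<^sub>R (f s - f t)) \<longlongrightarrow> d t) (at_left t)"
      using fI[of t] 5 at_within_Icc_at_left[OF ab] ab by simp
    ultimately show ?thesis using 5 ab by (simp add: has_velocity_left_right)
  qed
qed

lemma has_velocity_quadratic:
  fixes c0 v w :: "'e::{real_vector,t2_space}"
  assumes tvs: "tvs TYPE('e)"
  shows "has_velocity (\<lambda>s. c0 + (s - c) *\<^sub>R v + ((s - c)^2 / 2) *\<^sub>R w) t (v + (t - c) *\<^sub>R w)"
proof -
  have 1: "((\<lambda>s. v + ((s + t) / 2 - c) *\<^sub>R w) \<longlongrightarrow> v + ((t + t) / 2 - c) *\<^sub>R w) (at t)"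
    by (intro tvs_tendsto_add[OF tvs] tvs_tendsto_scaleR[OF tvs] tendsto_const tendsto_intros) auto
  have "\<forall>\<^sub>F s in at t. v + ((s + t) / 2 - c) *\<^sub>R w
      = (1 / (s - t)) *\<^sub>R ((c0 + (s - c) *\<^sub>R v + ((s - c)^2 / 2) *\<^sub>R w) - (c0 + (t - c) *\<^sub>R v + ((t - c)^2 / 2) *\<^sub>R w))"
    unfolding eventually_at_topological
  proof (intro exI[of _ UNIV] conjI ballI impI)
    show "open (UNIV::real set)" by simp
    show "t \<in> UNIV" by simp
  next
    fix s assume "s \<in> UNIV" "s \<noteq> t"
    then have st: "s - t \<noteq> 0" by simp
    have e1: "(s - c) *\<^sub>R v - (t - c) *\<^sub>R v = (s - t) *\<^sub>R v" by (simp add: algebra_simps)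
    have r: "(s - c)^2 / 2 - (t - c)^2 / 2 = (s - t) * ((s + t) / 2 - c)"
      by (simp add: power2_eq_square field_simps)
    have e2: "((s - c)^2 / 2) *\<^sub>R w - ((t - c)^2 / 2) *\<^sub>R w = ((s - t) * ((s + t) / 2 - c)) *\<^sub>R w"
      by (simp only: scaleR_diff_left[symmetric] r)
    have "(c0 + (s - c) *\<^sub>R v + ((s - c)^2 / 2) *\<^sub>R w) - (c0 + (t - c) *\<^sub>R v + ((t - c)^2 / 2) *\<^sub>R w)
        = (s - t) *\<^sub>R (v + ((s + t) / 2 - c) *\<^sub>R w)"
      using e1 e2 by (simp add: algebra_simps)
    then show "v + ((s + t) / 2 - c) *\<^sub>R w
      = (1 / (s - t)) *\<^sub>R (c0 + (s - c) *\<^sub>R v + ((s - c)^2 / 2) *\<^sub>R w - (c0 + (t - c) *\<^sub>R v + ((t - c)^2 / 2) *\<^sub>R w))"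
      using st by simp
  qed
  from Lim_transform_eventually[OF 1 this] show ?thesis by (simp add: has_velocity_def)
qed

lemma has_velocity_affine:
  fixes c0 w :: "'e::{real_vector,t2_space}"
  assumes tvs: "tvs TYPE('e)"
  shows "has_velocity (\<lambda>s. c0 + (s - c) *\<^sub>R w) t w"
proof -
  have e: "(s - c) *\<^sub>R w - (t - c) *\<^sub>R w = (s - t) *\<^sub>R w" for s
    using scaleR_diff_left[of "s - c" "t - c" w] by simp
  have "\<forall>\<^sub>F s in at t. w = (1 / (s - t)) *\<^sub>R ((c0 + (s - c) *\<^sub>R w) - (c0 + (t - c) *\<^sub>R w))"
    unfolding eventually_at_topological
    by (intro exI[of _ UNIV]) (auto simp: e)
  from Lim_transform_eventually[OF tendsto_const this] show ?thesis by (simp add: has_velocity_def)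
qed

lemma C2_curve_of_derivatives:
  fixes x x' x'' :: "real \<Rightarrow> 'e::{real_vector,t2_space}"
  assumes tvs: "tvs TYPE('e)" and ab: "\<alpha> < \<beta>" and xS: "x ` {\<alpha>..\<beta>} \<subseteq> S"
    and dx: "\<And>t. t \<in> {\<alpha>..\<beta>} \<Longrightarrow> ((\<lambda>s. (1 / (s - t)) *\<^sub>R (x s - x t)) \<longlongrightarrow> x' t) (at t within {\<alpha>..\<beta>})"
    and dx': "\<And>t. t \<in> {\<alpha>..\<beta>} \<Longrightarrow> ((\<lambda>s. (1 / (s - t)) *\<^sub>R (x' s - x' t)) \<longlongrightarrow> x'' t) (at t within {\<alpha>..\<beta>})"
    and cx'': "continuous_on {\<alpha>..\<beta>} x''"
  shows "C2_curve S \<alpha> \<beta> x"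
proof -
  let ?I = "{\<alpha>..\<beta>}"
  define Y where "Y s = (if s < \<alpha> then x \<alpha> + (s - \<alpha>) *\<^sub>R x' \<alpha> + ((s - \<alpha>)^2 / 2) *\<^sub>R x'' \<alpha>
    else if s > \<beta> then x \<beta> + (s - \<beta>) *\<^sub>R x' \<beta> + ((s - \<beta>)^2 / 2) *\<^sub>R x'' \<beta> else x s)" for s
  define Y' where "Y' s = (if s < \<alpha> then x' \<alpha> + (s - \<alpha>) *\<^sub>R x'' \<alpha>
    else if s > \<beta> then x' \<beta> + (s - \<beta>) *\<^sub>R x'' \<beta> else x' s)" for s
  define Y'' where "Y'' s = (if s < \<alpha> then x'' \<alpha> else if s > \<beta> then x'' \<beta> else x'' s)" for s
  have quotient_cong: "((\<lambda>s. (1 / (s - t)) *\<^sub>R (F s - F t)) \<longlongrightarrow> d) (at t within ?I)"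
    if "((\<lambda>s. (1 / (s - t)) *\<^sub>R (f s - f t)) \<longlongrightarrow> d) (at t within ?I)" "t \<in> ?I" "\<forall>s\<in>?I. F s = f s"
    for F f :: "real \<Rightarrow> 'e" and t d
  proof (rule Lim_transform_eventually[OF that(1)])
    show "\<forall>\<^sub>F s in at t within ?I. (1 / (s - t)) *\<^sub>R (f s - f t) = (1 / (s - t)) *\<^sub>R (F s - F t)"
      unfolding eventually_at_topological using that(2,3) by (intro exI[of _ UNIV]) auto
  qed
  have vY: "has_velocity Y t (Y' t)" for t
    unfolding Y'_def
    by (rule has_velocity_glue[OF ab quotient_cong[OF dx],
          where p = "\<lambda>s. x \<alpha> + (s - \<alpha>) *\<^sub>R x' \<alpha> + ((s - \<alpha>)^2 / 2) *\<^sub>R x'' \<alpha>"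
            and q = "\<lambda>s. x \<beta> + (s - \<beta>) *\<^sub>R x' \<beta> + ((s - \<beta>)^2 / 2) *\<^sub>R x'' \<beta>"])
       (use ab in \<open>auto simp: Y_def intro: has_velocity_quadratic[OF tvs]\<close>)
  have vY': "has_velocity Y' t (Y'' t)" for t
    unfolding Y''_def
    by (rule has_velocity_glue[OF ab quotient_cong[OF dx'],
          where p = "\<lambda>s. x' \<alpha> + (s - \<alpha>) *\<^sub>R x'' \<alpha>" and q = "\<lambda>s. x' \<beta> + (s - \<beta>) *\<^sub>R x'' \<beta>"])
       (use ab in \<open>auto simp: Y'_def intro: has_velocity_affine[OF tvs]\<close>)
  have "continuous_on UNIV Y'"
    by (rule continuous_at_imp_continuous_on) (use has_velocity_isCont[OF tvs vY'] in blast)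
  moreover have "continuous_on UNIV Y''"
  proof -
    have "Y'' = (\<lambda>s. x'' (max \<alpha> (min \<beta> s)))" using ab by (auto simp: Y''_def fun_eq_iff)
    then show ?thesis
      by (simp only:) (rule continuous_on_compose2[OF cx'']; use ab in \<open>auto intro!: continuous_intros\<close>)
  qed
  ultimately have "C2 UNIV Y" by (rule has_velocity_C2[OF tvs vY vY'])
  then show ?thesis
    unfolding C2_curve_def using xS by (intro conjI exI[of _ UNIV] exI[of _ Y]) (auto simp: Y_def)
qed

section \<open>Dyadic Riemann sums and weak derivatives\<close>

lemma sum_div_blocks:
  fixes f :: "nat \<Rightarrow> 'e::real_vector"
  assumes q: "q > 0"
  shows "(\<Sum>k<p * q. f (k div q)) = real q *\<^sub>R (\<Sum>j<p. f j)"
proof (induction p)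
  case 0 then show ?case by simp
next
  case (Suc p)
  have e: "(\<Sum>k\<in>{0..<p*q+q}. f (k div q)) = (\<Sum>k\<in>{0..<p*q}. f (k div q)) + (\<Sum>k\<in>{p*q..<p*q+q}. f (k div q))"
    by (rule sum.atLeastLessThan_concat[symmetric]) auto
  have "(\<Sum>k<Suc p * q. f (k div q)) = (\<Sum>k\<in>{0..<p*q}. f (k div q)) + (\<Sum>k\<in>{p*q..<p*q+q}. f (k div q))"
    using e by (simp add: atLeast0LessThan add.commute)
  also have "(\<Sum>k\<in>{p*q..<p*q+q}. f (k div q)) = (\<Sum>k\<in>{p*q..<p*q+q}. f p)"
  proof (rule sum.cong[OF refl])
    fix k assume "k \<in> {p*q..<p*q+q}"
    then have "k div q = p" using q by (auto simp: div_nat_eqI mult.commute)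
    then show "f (k div q) = f p" by simp
  qed
  also have "\<dots> = real q *\<^sub>R f p" by (simp add: sum_constant_scaleR)
  finally show ?case using Suc by (simp add: atLeast0LessThan scaleR_add_right)
qed

definition dyadic_sum :: "(real \<Rightarrow> 'e::real_vector) \<Rightarrow> real \<Rightarrow> real \<Rightarrow> nat \<Rightarrow> 'e" where
  "dyadic_sum \<zeta> a h n = (\<Sum>k<2^n. (h / 2^n) *\<^sub>R \<zeta> (a + real k * h / 2^n))"

lemma dyadic_node_mem:
  assumes "k \<le> 2^n" "h > 0"
  shows "a + real k * h / 2^n \<in> {a..a+h}"
proof -
  have "real k \<le> 2^n" using assms(1) by (metis of_nat_le_iff of_nat_numeral of_nat_power)
  then have "real k * h / 2^n \<le> 2^n * h / 2^n" using assms(2) by (intro divide_right_mono mult_right_mono) auto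
  then show ?thesis using assms(2) by simp
qed

lemma dyadic_average_in_convex:
  assumes C: "convex C" and h: "h > 0" and \<zeta>C: "\<And>y. y \<in> {a..a+h} \<Longrightarrow> \<zeta> y - c \<in> C"
  shows "(1 / h) *\<^sub>R dyadic_sum \<zeta> a h n - c \<in> C"
proof -
  have "(1 / h) *\<^sub>R dyadic_sum \<zeta> a h n - c = (\<Sum>k<2^n. (1 / real (2^n)) *\<^sub>R (\<zeta> (a + real k * h / 2^n) - c))"
    using h by (simp add: dyadic_sum_def scaleR_sum_right scaleR_diff_right sum_subtractf sum_constant_scaleR)
  also have "\<dots> \<in> C"
    using h by (intro convex_average[OF C] \<zeta>C dyadic_node_mem) auto
  finally show ?thesis .
qed

lemma dyadic_sum_refine:
  assumes "n \<le> m"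
  shows "dyadic_sum \<zeta> a h n = (\<Sum>k<2^m. (h / 2^m) *\<^sub>R \<zeta> (a + real (k div 2^(m-n)) * h / 2^n))"
proof -
  define q :: nat where "q = 2^(m-n)"
  have q: "q > 0" by (simp add: q_def)
  have m: "(2::nat)^m = 2^n * q" using assms by (simp add: q_def power_add[symmetric])
  have mr: "(2::real)^m = 2^n * real q" using assms by (simp add: q_def power_add[symmetric])
  have "(\<Sum>k<2^m. (h / 2^m) *\<^sub>R \<zeta> (a + real (k div q) * h / 2^n))
      = real q *\<^sub>R (\<Sum>j<2^n. (h / 2^m) *\<^sub>R \<zeta> (a + real j * h / 2^n))"
    unfolding m by (rule sum_div_blocks[OF q, of "\<lambda>j. (h / 2^m) *\<^sub>R \<zeta> (a + real j * h / 2^n)" "2^n"])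
  also have "\<dots> = dyadic_sum \<zeta> a h n"
    unfolding dyadic_sum_def scaleR_sum_right using q by (intro sum.cong refl) (simp add: mr)
  finally show ?thesis by (simp add: q_def)
qed

lemma dyadic_nodes_close:
  fixes a h :: real and m n k :: nat
  assumes "n \<le> m" "k < 2^m" "h > 0"
  defines "c \<equiv> a + real (k div 2^(m-n)) * h / 2^n" and "f \<equiv> a + real k * h / 2^m"
  shows "c \<in> {a..a+h}" "f \<in> {a..a+h}" "\<bar>c - f\<bar> < h / 2^n"
proof -
  define q :: nat where "q = 2^(m-n)"
  have q: "q > 0" by (simp add: q_def)
  have m: "(2::nat)^m = 2^n * q" using assms by (simp add: q_def power_add[symmetric])
  have mr: "(2::real)^m = 2^n * real q" using assms by (simp add: q_def power_add[symmetric])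
  have "k div q < 2^n" using assms(2) m q by (simp add: div_less_iff_less_mult)
  from dyadic_node_mem[OF less_imp_le[OF this] assms(3)]
  show "c \<in> {a..a+h}" unfolding c_def q_def .
  from dyadic_node_mem[OF less_imp_le[OF assms(2)] assms(3)]
  show "f \<in> {a..a+h}" unfolding f_def .
  have "k = q * (k div q) + k mod q" by simp
  then have "real k = real q * real (k div q) + real (k mod q)"
    by (metis of_nat_add of_nat_mult)
  then have "f - c = h / 2^m * real (k mod q)"
    unfolding f_def c_def q_def[symmetric] using mr q by (simp add: field_simps)
  moreover have "h / 2^m * real (k mod q) < h / 2^m * real q"
    using assms(3) q by (intro mult_strict_left_mono) auto
  moreover have "h / 2^m * real q = h / 2^n" using mr q by simp
  moreover have "0 \<le> h / 2^m * real (k mod q)" using assms(3) by simp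
  ultimately show "\<bar>c - f\<bar> < h / 2^n" by linarith
qed

lemma dyadic_sum_diff:
  fixes \<zeta> :: "real \<Rightarrow> 'e::real_vector"
  assumes "n \<le> m"
  shows "dyadic_sum \<zeta> a h n - dyadic_sum \<zeta> a h m = h *\<^sub>R (\<Sum>k<2^m. (1 / real (2^m)) *\<^sub>R
      (\<zeta> (a + real (k div 2^(m-n)) * h / 2^n) - \<zeta> (a + real k * h / 2^m)))"
proof -
  have "dyadic_sum \<zeta> a h n - dyadic_sum \<zeta> a h m = (\<Sum>k<2^m. (h / 2^m) *\<^sub>R
      (\<zeta> (a + real (k div 2^(m-n)) * h / 2^n) - \<zeta> (a + real k * h / 2^m)))"
    unfolding dyadic_sum_refine[OF assms] by (simp add: dyadic_sum_def scaleR_diff_right sum_subtractf)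
  also have "\<dots> = h *\<^sub>R (\<Sum>k<2^m. (1 / real (2^m)) *\<^sub>R
      (\<zeta> (a + real (k div 2^(m-n)) * h / 2^n) - \<zeta> (a + real k * h / 2^m)))"
    by (simp add: scaleR_sum_right)
  finally show ?thesis .
qed

lemma dyadic_sum_diff_in_convex:
  assumes C: "convex C" and h: "h > 0" and nm: "n \<le> m"
    and \<zeta>C: "\<And>s s'. s \<in> {a..a+h} \<Longrightarrow> s' \<in> {a..a+h} \<Longrightarrow> \<bar>s - s'\<bar> < h / 2^n \<Longrightarrow> \<zeta> s - \<zeta> s' \<in> C"
  shows "\<exists>u\<in>C. dyadic_sum \<zeta> a h n - dyadic_sum \<zeta> a h m = h *\<^sub>R u"
proof -
  have "(\<Sum>k<2^m. (1 / real (2^m)) *\<^sub>R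
      (\<zeta> (a + real (k div 2^(m-n)) * h / 2^n) - \<zeta> (a + real k * h / 2^m))) \<in> C"
    using dyadic_nodes_close[OF nm _ h] by (intro convex_average[OF C] \<zeta>C) auto
  then show ?thesis unfolding dyadic_sum_diff[OF nm] by blast
qed

lemma dyadic_sum_convergent:
  fixes \<zeta> :: "real \<Rightarrow> 'v::{real_vector,t2_space}"
  assumes lcs: "lcs TYPE('v)" and h: "h > 0" and c: "continuous_on {a..a+h} \<zeta>"
  shows "\<exists>J. dyadic_sum \<zeta> a h \<longlonglongrightarrow> J"
proof -
  have tvs: "tvs TYPE('v)" by (rule lcs_imp_tvs[OF lcs])
  have comp: "\<And>X::nat \<Rightarrow> 'v. (\<forall>U. open U \<and> 0 \<in> U \<longrightarrow> (\<exists>N. \<forall>m\<ge>N. \<forall>n\<ge>N. X m - X n \<in> U))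
        \<Longrightarrow> (\<exists>l. X \<longlonglongrightarrow> l)"
    using lcs unfolding lcs_def by blast
  have lconv: "\<And>U::'v set. open U \<Longrightarrow> 0 \<in> U \<Longrightarrow> \<exists>C. open C \<and> convex C \<and> 0 \<in> C \<and> C \<subseteq> U"
    using lcs unfolding lcs_def by blast
  show ?thesis
  proof (rule comp, intro allI impI, elim conjE)
    fix U :: "'v set" assume U: "open U" "0 \<in> U"
    define U' where "U' = {u. h *\<^sub>R u \<in> U} \<inter> {u. (-h) *\<^sub>R u \<in> U}"
    have "open U'" unfolding U'_def
      using tvs_open_scale[OF tvs U(1), of h] tvs_open_scale[OF tvs U(1), of "-h"] by auto
    moreover have "0 \<in> U'" using U(2) by (simp add: U'_def)
    ultimately obtain C where C: "open C" "convex C" "0 \<in> C" "C \<subseteq> U'" using lconv by blast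
    obtain \<delta> where \<delta>: "\<delta> > 0" "\<And>s s'. s \<in> {a..a+h} \<Longrightarrow> s' \<in> {a..a+h} \<Longrightarrow> \<bar>s - s'\<bar> < \<delta> \<Longrightarrow> \<zeta> s - \<zeta> s' \<in> C"
      using tvs_uniformly_continuous[OF tvs compact_Icc c C(1,3)] by blast
    obtain N where N: "(1/2::real)^N < \<delta> / h" using real_arch_pow_inv[of "\<delta>/h" "1/2"] \<delta> h by auto
    have hN: "h / 2^N < \<delta>" using N h by (simp add: field_simps power_one_over)
    have key: "\<exists>u\<in>C. dyadic_sum \<zeta> a h n - dyadic_sum \<zeta> a h m = h *\<^sub>R u" if nm: "n \<le> m" "N \<le> n" for n m
    proof (rule dyadic_sum_diff_in_convex[OF C(2) h nm(1)])
      fix s s' assume "s \<in> {a..a+h}" "s' \<in> {a..a+h}" "\<bar>s - s'\<bar> < h / 2^n"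
      moreover have "h / 2^n \<le> h / 2^N"
        using nm(2) h by (intro divide_left_mono) (auto intro: power_increasing)
      ultimately show "\<zeta> s - \<zeta> s' \<in> C" using hN by (intro \<delta>(2)) auto
    qed
    show "\<exists>N. \<forall>m\<ge>N. \<forall>n\<ge>N. dyadic_sum \<zeta> a h m - dyadic_sum \<zeta> a h n \<in> U"
    proof (intro exI[of _ N] allI impI)
      fix m n assume m: "N \<le> m" and n: "N \<le> n"
      show "dyadic_sum \<zeta> a h m - dyadic_sum \<zeta> a h n \<in> U"
      proof (cases "m \<le> n")
        case True
        then obtain u where "u \<in> C" "dyadic_sum \<zeta> a h m - dyadic_sum \<zeta> a h n = h *\<^sub>R u" using key[of m n] m by blast
        then show ?thesis using C(4) by (auto simp: U'_def)
      next
        case False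
        then obtain u where u: "u \<in> C" "dyadic_sum \<zeta> a h n - dyadic_sum \<zeta> a h m = h *\<^sub>R u" using key[of n m] n by force
        then have "dyadic_sum \<zeta> a h m - dyadic_sum \<zeta> a h n = (-h) *\<^sub>R u" by (simp add: algebra_simps)
        then show ?thesis using u(1) C(4) by (auto simp: U'_def)
      qed
    qed
  qed
qed

lemma dyadic_sum_MVT:
  fixes f f' :: "real \<Rightarrow> real"
  assumes h: "h > 0" and d: "\<And>t. t \<in> {a..a+h} \<Longrightarrow> (f has_real_derivative f' t) (at t within {a..a+h})"
  obtains \<theta> where "\<And>k. k < 2^n \<Longrightarrow> a + real k * h / 2^n < \<theta> k \<and> \<theta> k < a + real (Suc k) * h / 2^n"
    "f (a + h) - f a = (\<Sum>k<2^n. (h / 2^n) * f' (\<theta> k))"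
proof -
  define s where "s k = a + real k * h / 2^n" for k
  have step: "s (Suc k) - s k = h / 2^n" for k by (simp add: s_def field_simps)
  have "\<exists>\<theta>. s k < \<theta> \<and> \<theta> < s (Suc k) \<and> f (s (Suc k)) - f (s k) = (h / 2^n) * f' \<theta>" if "k < 2^n" for k
  proof -
    have "s k \<in> {a..a+h}" "s (Suc k) \<in> {a..a+h}"
      using dyadic_node_mem[of k n h a] dyadic_node_mem[of "Suc k" n h a] that h by (auto simp: s_def)
    moreover have "s k < s (Suc k)" using step[of k] h by (simp add: algebra_simps)
    ultimately show ?thesis
      using MVT_within_Icc[of a "a + h" f f' "s k" "s (Suc k)"] d h step[of k] by auto
  qed
  then obtain \<theta> where \<theta>: "\<And>k. k < 2^n \<Longrightarrow> s k < \<theta> k \<and> \<theta> k < s (Suc k) \<and> f (s (Suc k)) - f (s k) = (h / 2^n) * f' (\<theta> k)"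
    by metis
  have "f (a + h) - f a = (\<Sum>k<2^n. f (s (Suc k)) - f (s k))"
    using sum_lessThan_telescope[of "\<lambda>k. f (s k)" "2^n"] by (simp add: s_def)
  also have "\<dots> = (\<Sum>k<2^n. (h / 2^n) * f' (\<theta> k))" using \<theta> by (intro sum.cong) auto
  finally show ?thesis using that \<theta> unfolding s_def by blast
qed

lemma dyadic_sum_tendsto_real:
  fixes f f' :: "real \<Rightarrow> real"
  assumes h: "h > 0" and deriv: "\<And>t. t \<in> {a..a+h} \<Longrightarrow> (f has_real_derivative f' t) (at t within {a..a+h})"
    and c: "continuous_on {a..a+h} f'"
  shows "dyadic_sum f' a h \<longlonglongrightarrow> f (a + h) - f a"
proof (rule LIMSEQ_I)
  fix e :: real assume e: "e > 0"
  have "uniformly_continuous_on {a..a+h} f'" by (rule compact_uniformly_continuous[OF c compact_Icc])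
  then obtain d where d: "d > 0"
    "\<And>x x'. x \<in> {a..a+h} \<Longrightarrow> x' \<in> {a..a+h} \<Longrightarrow> dist x' x < d \<Longrightarrow> dist (f' x') (f' x) < e / (2 * h)"
    using e h unfolding uniformly_continuous_on_def by (metis divide_pos_pos mult_pos_pos zero_less_numeral)
  obtain N where N: "(1/2::real)^N < d / h" using real_arch_pow_inv[of "d/h" "1/2"] d h by auto
  show "\<exists>N. \<forall>n\<ge>N. norm (dyadic_sum f' a h n - (f (a + h) - f a)) < e"
  proof (intro exI[of _ N] allI impI)
    fix n assume n: "N \<le> n"
    have "h / 2^n \<le> h / 2^N" using n h by (intro divide_left_mono) (auto intro: power_increasing)
    also have "\<dots> < d" using N h by (simp add: field_simps power_one_over)
    finally have hn: "h / 2^n < d" .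
    obtain \<theta> where \<theta>: "\<And>k. k < 2^n \<Longrightarrow> a + real k * h / 2^n < \<theta> k \<and> \<theta> k < a + real (Suc k) * h / 2^n"
      and F: "f (a + h) - f a = (\<Sum>k<2^n. (h / 2^n) * f' (\<theta> k))"
      using dyadic_sum_MVT[OF h deriv, where n = n] by blast
    have "\<bar>(h / 2^n) * (f' (a + real k * h / 2^n) - f' (\<theta> k))\<bar> \<le> (h / 2^n) * (e / (2 * h))"
      if k: "k < 2^n" for k
    proof -
      have nodes: "a + real k * h / 2^n \<in> {a..a+h}" "a + real (Suc k) * h / 2^n \<in> {a..a+h}"
        using dyadic_node_mem[of k n h a] dyadic_node_mem[of "Suc k" n h a] k h by auto
      have "dist (\<theta> k) (a + real k * h / 2^n) < d"
        using \<theta>[OF k] hn by (simp add: dist_real_def field_simps)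
      then have "\<bar>f' (a + real k * h / 2^n) - f' (\<theta> k)\<bar> \<le> e / (2 * h)"
        using d(2)[of "a + real k * h / 2^n" "\<theta> k"] nodes \<theta>[OF k] by (simp add: dist_real_def abs_minus_commute)
      then have "(h / 2^n) * \<bar>f' (a + real k * h / 2^n) - f' (\<theta> k)\<bar> \<le> (h / 2^n) * (e / (2 * h))"
        by (rule mult_left_mono) (use h in simp)
      moreover have "\<bar>(h / 2^n) * (f' (a + real k * h / 2^n) - f' (\<theta> k))\<bar>
          = (h / 2^n) * \<bar>f' (a + real k * h / 2^n) - f' (\<theta> k)\<bar>"
        using h by (simp add: abs_mult)
      ultimately show ?thesis by simp
    qed
    then have "\<bar>\<Sum>k<2^n. (h / 2^n) * (f' (a + real k * h / 2^n) - f' (\<theta> k))\<bar> \<le> (\<Sum>k<(2::nat)^n. (h / 2^n) * (e / (2 * h)))"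
      by (intro order_trans[OF sum_abs sum_mono]) auto
    also have "\<dots> = e / 2" using h by simp
    finally show "norm (dyadic_sum f' a h n - (f (a + h) - f a)) < e"
      using e by (simp add: F dyadic_sum_def sum_subtractf[symmetric] algebra_simps)
  qed
qed

lemma dyadic_sum_tendsto_difference:
  fixes z \<zeta> :: "real \<Rightarrow> 'v::{real_vector,t2_space}"
  assumes lcs: "lcs TYPE('v)" and h: "h > 0" and c\<zeta>: "continuous_on {a..a+h} \<zeta>"
    and L: "\<And>l. l \<in> L \<Longrightarrow> linear l \<and> continuous_on UNIV l"
    and sep: "\<And>u. (\<forall>l\<in>L. l u = 0) \<Longrightarrow> u = 0"
    and dz: "\<And>l t. l \<in> L \<Longrightarrow> t \<in> {a..a+h} \<Longrightarrow>
       ((\<lambda>s. l (z s)) has_real_derivative l (\<zeta> t)) (at t within {a..a+h})"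
  shows "dyadic_sum \<zeta> a h \<longlonglongrightarrow> z (a + h) - z a"
proof -
  obtain J where J: "dyadic_sum \<zeta> a h \<longlonglongrightarrow> J" using dyadic_sum_convergent[OF lcs h c\<zeta>] by blast
  have "l J = l (z (a + h) - z a)" if l: "l \<in> L" for l
  proof -
    have lin: "linear l" and cl: "continuous_on UNIV l" using L[OF l] by auto
    have "(\<lambda>n. l (dyadic_sum \<zeta> a h n)) \<longlonglongrightarrow> l J"
      by (rule continuous_on_tendsto_compose[OF cl J]) auto
    moreover have "l (dyadic_sum \<zeta> a h n) = dyadic_sum (\<lambda>s. l (\<zeta> s)) a h n" for n
      unfolding dyadic_sum_def linear_sum[OF lin] linear_scale[OF lin] by simp
    moreover have "dyadic_sum (\<lambda>s. l (\<zeta> s)) a h \<longlonglongrightarrow> l (z (a + h)) - l (z a)"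
      using l by (intro dyadic_sum_tendsto_real[OF h dz] continuous_on_compose2[OF cl c\<zeta>]) auto
    ultimately show ?thesis using LIMSEQ_unique linear_diff[OF lin] by fastforce
  qed
  then have "J = z (a + h) - z a" using sep[of "J - (z (a + h) - z a)"] L by (simp add: linear_diff)
  then show ?thesis using J by simp
qed

lemma lcs_convex_nbhd_closure:
  fixes S :: "'v::{real_vector,t2_space} set"
  assumes lcs: "lcs TYPE('v)" and S: "open S" "p \<in> S"
  obtains C where "open C" "convex C" "0 \<in> C" "\<And>u. u \<in> closure C \<Longrightarrow> p + u \<in> S"
proof -
  have tvs: "tvs TYPE('v)" by (rule lcs_imp_tvs[OF lcs])
  have "open {u. p + u \<in> S}" "0 \<in> {u. p + u \<in> S}"
    using S by (auto intro: tvs_open_translate[OF tvs])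
  then obtain V where V: "open V" "0 \<in> V" "closure V \<subseteq> {u. p + u \<in> S}"
    using tvs_regular[OF tvs] by metis
  obtain C where C: "open C" "convex C" "0 \<in> C" "C \<subseteq> V"
    using lcs V(1,2) unfolding lcs_def by blast
  show ?thesis
  proof (rule that[OF C(1-3)])
    fix u assume "u \<in> closure C"
    then show "p + u \<in> S" using closure_mono[OF C(4)] V(3) by blast
  qed
qed

lemma weak_derivative_imp_derivative:
  fixes z \<zeta> :: "real \<Rightarrow> 'v::{real_vector,t2_space}"
  assumes lcs: "lcs TYPE('v)" and c\<zeta>: "continuous_on {\<alpha>..\<beta>} \<zeta>"
    and L: "\<And>l. l \<in> L \<Longrightarrow> linear l \<and> continuous_on UNIV l"
    and sep: "\<And>u. (\<forall>l\<in>L. l u = 0) \<Longrightarrow> u = 0"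
    and dz: "\<And>l t. l \<in> L \<Longrightarrow> t \<in> {\<alpha>..\<beta>} \<Longrightarrow>
       ((\<lambda>s. l (z s)) has_real_derivative l (\<zeta> t)) (at t within {\<alpha>..\<beta>})"
    and t: "t \<in> {\<alpha>..\<beta>}"
  shows "((\<lambda>s. (1 / (s - t)) *\<^sub>R (z s - z t)) \<longlongrightarrow> \<zeta> t) (at t within {\<alpha>..\<beta>})"
proof (rule topological_tendstoI)
  let ?I = "{\<alpha>..\<beta>}"
  have tvs: "tvs TYPE('v)" by (rule lcs_imp_tvs[OF lcs])
  fix S assume S: "open S" "\<zeta> t \<in> S"
  obtain C where C: "open C" "convex C" "0 \<in> C" "\<And>u. u \<in> closure C \<Longrightarrow> \<zeta> t + u \<in> S"
    by (rule lcs_convex_nbhd_closure[OF lcs S]) blast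
  have "open {u. - \<zeta> t + u \<in> C}" by (rule tvs_open_translate[OF tvs C(1)])
  moreover have "\<zeta> t \<in> {u. - \<zeta> t + u \<in> C}" using C(3) by simp
  ultimately obtain A where A: "open A" "t \<in> A" "\<forall>y\<in>?I. y \<in> A \<longrightarrow> \<zeta> y \<in> {u. - \<zeta> t + u \<in> C}"
    using c\<zeta> t unfolding continuous_on_topological by metis
  obtain r where r: "r > 0" "ball t r \<subseteq> A" using A(1,2) open_contains_ball by blast
  show "\<forall>\<^sub>F s in at t within ?I. (1 / (s - t)) *\<^sub>R (z s - z t) \<in> S"
    unfolding eventually_at
  proof (intro exI[of _ r] conjI ballI impI)
    show "0 < r" by (rule r(1))
  next
    fix s assume sI: "s \<in> ?I" and s: "s \<noteq> t \<and> dist s t < r"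
    define a where "a = min s t"
    define h where "h = \<bar>s - t\<bar>"
    have h: "h > 0" using s by (simp add: h_def)
    have ah: "a + h = max s t" by (simp add: a_def h_def)
    have sub: "{a..a+h} \<subseteq> ?I" using sI t ah by (auto simp: a_def)
    have \<zeta>C: "\<zeta> y - \<zeta> t \<in> C" if "y \<in> {a..a+h}" for y
    proof -
      have "y \<in> ?I" "y \<in> ball t r" using that sub s ah by (auto simp: a_def dist_real_def)
      then show ?thesis using A(3) r(2) by (auto simp: algebra_simps)
    qed
    have "dyadic_sum \<zeta> a h \<longlonglongrightarrow> z (a + h) - z a"
      using sub by (intro dyadic_sum_tendsto_difference[OF lcs h _ L sep] continuous_on_subset[OF c\<zeta>]
          DERIV_subset[OF dz]) auto
    txt \<open>The difference quotient is a limit of averages of \<open>\<zeta>\<close> over \<open>[a, a + h]\<close>,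
      which stay in the convex set \<open>\<zeta> t + C\<close>.\<close>
    then have lim: "(\<lambda>n. (1 / h) *\<^sub>R dyadic_sum \<zeta> a h n - \<zeta> t) \<longlonglongrightarrow> (1 / h) *\<^sub>R (z (a + h) - z a) - \<zeta> t"
      by (intro tvs_tendsto_diff[OF tvs] tvs_tendsto_scaleR[OF tvs] tendsto_const)
    have "(1 / h) *\<^sub>R (z (a + h) - z a) - \<zeta> t \<in> closure C"
      by (rule Lim_in_closed_set[OF closed_closure _ _ lim])
        (use dyadic_average_in_convex[where \<zeta> = \<zeta> and c = "\<zeta> t", OF C(2) h \<zeta>C] closure_subset in \<open>auto intro!: always_eventually\<close>)
    moreover have "(1 / (s - t)) *\<^sub>R (z s - z t) = (1 / h) *\<^sub>R (z (a + h) - z a)"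
    proof (cases "s < t")
      case True
      then have "a = s" "a + h = t" using ah by (auto simp: a_def)
      have e: "1 / (s - t) = - (1 / (t - s))" by (metis minus_diff_eq divide_minus_right)
      have "\<bar>s - t\<bar> = t - s" using True by simp
      then show ?thesis unfolding h_def using \<open>a = s\<close> \<open>a + h = t\<close>
        by (simp add: e algebra_simps)
    next
      case False
      then show ?thesis using ah s by (auto simp: a_def h_def)
    qed
    ultimately show "(1 / (s - t)) *\<^sub>R (z s - z t) \<in> S" using C(4) by fastforce
  qed
qed

section \<open>A Riemannian metric with Levi-Civita connection\<close>

locale levi_civita_space =
  fixes \<Omega> :: "'v::{real_vector,t2_space} set"
    and g :: "'v \<Rightarrow> 'v \<Rightarrow> 'v \<Rightarrow> real"
    and A :: "'v \<Rightarrow> 'v \<Rightarrow> 'v \<Rightarrow> 'v"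
    and \<alpha> \<beta> :: real
  assumes lcs: "lcs TYPE('v)"
    and open_dom: "open \<Omega>"
    and ab: "\<alpha> < \<beta>"
    and metric: "riem_metric \<Omega> g"
    and connection: "levi_civita \<Omega> g A"
begin

definition metric_fn :: "'v \<times> 'v \<times> 'v \<Rightarrow> real" where "metric_fn = (\<lambda>(v, \<xi>, \<eta>). g v \<xi> \<eta>)"

definition metric_dom :: "('v \<times> 'v \<times> 'v) set" where "metric_dom = \<Omega> \<times> UNIV \<times> UNIV"

lemma tvs_V: "tvs TYPE('v)" by (rule lcs_imp_tvs[OF lcs])

lemma tvs_V3: "tvs TYPE('v \<times> 'v \<times> 'v)" by (intro tvs_prod tvs_V)

lemma C1_metric_fn: "C1 metric_dom metric_fn" using connection unfolding levi_civita_def metric_fn_def metric_dom_def by blast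

lemma continuous_on_metric_fn: "continuous_on metric_dom metric_fn" by (rule C1_continuous_on[OF tvs_V3 C1_metric_fn])

lemma g_linear_left: "v \<in> \<Omega> \<Longrightarrow> linear (\<lambda>\<xi>. g v \<xi> \<eta>)" using metric unfolding riem_metric_def by blast

lemma g_linear_right: "v \<in> \<Omega> \<Longrightarrow> linear (\<lambda>\<eta>. g v \<xi> \<eta>)" using metric unfolding riem_metric_def by blast

lemma g_sym: "v \<in> \<Omega> \<Longrightarrow> g v \<xi> \<eta> = g v \<eta> \<xi>" using metric unfolding riem_metric_def by blast

lemma g_pos: "v \<in> \<Omega> \<Longrightarrow> \<xi> \<noteq> 0 \<Longrightarrow> g v \<xi> \<xi> > 0" using metric unfolding riem_metric_def by blast

lemma g_add_left: "v \<in> \<Omega> \<Longrightarrow> g v (a + b) \<eta> = g v a \<eta> + g v b \<eta>"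
  using linear_add[OF g_linear_left] by blast

lemma g_add_right: "v \<in> \<Omega> \<Longrightarrow> g v \<xi> (a + b) = g v \<xi> a + g v \<xi> b"
  using linear_add[OF g_linear_right] by blast

lemma g_scaleR_left: "v \<in> \<Omega> \<Longrightarrow> g v (c *\<^sub>R a) \<eta> = c * g v a \<eta>"
  using linear_scale[OF g_linear_left] by (simp)

lemma g_scaleR_right: "v \<in> \<Omega> \<Longrightarrow> g v \<xi> (c *\<^sub>R a) = c * g v \<xi> a"
  using linear_scale[OF g_linear_right] by (simp)

lemma g_zero_left: "v \<in> \<Omega> \<Longrightarrow> g v 0 \<eta> = 0"
  using linear_0[OF g_linear_left] by blast

lemma g_zero_right: "v \<in> \<Omega> \<Longrightarrow> g v \<xi> 0 = 0"
  using linear_0[OF g_linear_right] by blast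

lemma A_linear_dir: "v \<in> \<Omega> \<Longrightarrow> linear (\<lambda>\<xi>. A v \<xi> w)" using connection unfolding levi_civita_def by blast

lemma A_sym: "v \<in> \<Omega> \<Longrightarrow> A v \<xi> \<eta> = A v \<eta> \<xi>" using connection unfolding levi_civita_def by blast

lemma continuous_on_A: "continuous_on (\<Omega> \<times> UNIV \<times> UNIV) (\<lambda>(v, \<xi>, w). A v \<xi> w)"
  using connection unfolding levi_civita_def by blast

lemma dd_metric_fn_left: "v \<in> \<Omega> \<Longrightarrow> dd metric_fn (v, \<xi>, \<eta>) (0, a, 0) = g v a \<eta>"
proof (rule dd_eqI)
  assume v: "v \<in> \<Omega>"
  have "\<forall>\<^sub>F t in at (0::real). g v a \<eta> = (1 / t) *\<^sub>R (metric_fn ((v, \<xi>, \<eta>) + t *\<^sub>R (0, a, 0)) - metric_fn (v, \<xi>, \<eta>))"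
    unfolding eventually_at by (intro exI[of _ 1]) (auto simp: metric_fn_def g_add_left[OF v] g_scaleR_left[OF v])
  from Lim_transform_eventually[OF tendsto_const this]
  show "has_dirderiv metric_fn (v, \<xi>, \<eta>) (0, a, 0) (g v a \<eta>)" unfolding has_dirderiv_def .
qed

lemma dd_metric_fn_right: "v \<in> \<Omega> \<Longrightarrow> dd metric_fn (v, \<xi>, \<eta>) (0, 0, b) = g v \<xi> b"
proof (rule dd_eqI)
  assume v: "v \<in> \<Omega>"
  have "\<forall>\<^sub>F t in at (0::real). g v \<xi> b = (1 / t) *\<^sub>R (metric_fn ((v, \<xi>, \<eta>) + t *\<^sub>R (0, 0, b)) - metric_fn (v, \<xi>, \<eta>))"
    unfolding eventually_at by (intro exI[of _ 1]) (auto simp: metric_fn_def g_add_right[OF v] g_scaleR_right[OF v])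
  from Lim_transform_eventually[OF tendsto_const this]
  show "has_dirderiv metric_fn (v, \<xi>, \<eta>) (0, 0, b) (g v \<xi> b)" unfolding has_dirderiv_def .
qed

text \<open>The Levi-Civita identity for constant vector fields.\<close>

lemma dd_metric_fn_base: "v \<in> \<Omega> \<Longrightarrow> dd metric_fn (v, \<xi>, \<eta>) (a, 0, 0) = g v (A v a \<xi>) \<eta> + g v \<xi> (A v a \<eta>)"
proof (rule dd_eqI)
  assume v: "v \<in> \<Omega>"
  have comp: "\<forall>\<xi> \<phi> \<psi>. C1 \<Omega> \<phi> \<and> C1 \<Omega> \<psi> \<longrightarrow>
        (\<forall>v\<in>\<Omega>. has_dirderiv (\<lambda>u. g u (\<phi> u) (\<psi> u)) v \<xi>
                   (g v (covD A \<xi> \<phi> v) (\<psi> v) + g v (\<phi> v) (covD A \<xi> \<psi> v)))"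
    using connection unfolding levi_civita_def by blast
  have "has_dirderiv (\<lambda>u. g u \<xi> \<eta>) v a
      (g v (covD A a (\<lambda>_. \<xi>) v) \<eta> + g v \<xi> (covD A a (\<lambda>_. \<eta>) v))"
    using comp C1_const[OF open_dom] v by fastforce
  moreover have "covD A a (\<lambda>_. c) v = A v a c" for c
    unfolding covD_def using dd_eqI[of "\<lambda>_::'v. c" v a 0] by (simp add: has_dirderiv_def)
  ultimately show "has_dirderiv metric_fn (v, \<xi>, \<eta>) (a, 0, 0) (g v (A v a \<xi>) \<eta> + g v \<xi> (A v a \<eta>))"
    unfolding has_dirderiv_def metric_fn_def by simp
qed

lemma dd_metric_fn: "v \<in> \<Omega> \<Longrightarrow> dd metric_fn (v, \<xi>, \<eta>) (a, b, c)
    = g v (A v a \<xi>) \<eta> + g v \<xi> (A v a \<eta>) + g v b \<eta> + g v \<xi> c"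
proof -
  assume v: "v \<in> \<Omega>"
  have p: "(v, \<xi>, \<eta>) \<in> metric_dom" using v by (simp add: metric_dom_def)
  have "(a, b, c) = (a, 0, 0) + ((0, b, 0) + (0, 0, c))" by simp
  then have "dd metric_fn (v, \<xi>, \<eta>) (a, b, c) = dd metric_fn (v, \<xi>, \<eta>) (a, 0, 0) + (dd metric_fn (v, \<xi>, \<eta>) (0, b, 0) + dd metric_fn (v, \<xi>, \<eta>) (0, 0, c))"
    using C1_dd_add[OF tvs_V3 C1_metric_fn p] by metis
  then show ?thesis using dd_metric_fn_base[OF v] dd_metric_fn_left[OF v] dd_metric_fn_right[OF v] by simp
qed

lemma metric_nondegenerate:
  assumes "v \<in> \<Omega>" "\<And>w. g v \<xi> w = 0"
  shows "\<xi> = 0"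
  using g_pos[OF assms(1), of \<xi>] assms(2)[of \<xi>] by fastforce

lemma DERIV_metric_along_curves:
  assumes c: "has_velocity c t c'" and v: "has_velocity v t v'" and y: "has_velocity y t y'"
    and ct: "c t \<in> \<Omega>"
  shows "((\<lambda>s. g (c s) (v s) (y s)) has_real_derivative
     g (c t) (v' + A (c t) c' (v t)) (y t) + g (c t) (A (c t) (y t) c') (v t) + g (c t) (v t) y') (at t)"
proof -
  have "has_velocity (\<lambda>s. (c s, v s, y s)) t (c', v', y')"
    using tendsto_Pair[OF c[unfolded has_velocity_def] tendsto_Pair[OF v[unfolded has_velocity_def] y[unfolded has_velocity_def]]]
    by (simp add: has_velocity_def)
  from C1_chain[OF tvs_V3 C1_metric_fn this] ct
  have "((\<lambda>s. metric_fn (c s, v s, y s)) has_real_derivative dd metric_fn (c t, v t, y t) (c', v', y')) (at t)"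
    by (simp add: metric_dom_def)
  then show ?thesis
    using dd_metric_fn[OF ct] g_add_left[OF ct] g_sym[OF ct, of "v t"] A_sym[OF ct, of "y t"]
    by (simp add: metric_fn_def add_ac)
qed

definition first_variation :: "(real \<Rightarrow> 'v) \<Rightarrow> (real \<Rightarrow> 'v) \<Rightarrow> real \<Rightarrow> real" where
  "first_variation x y t = g (x t) (A (x t) (y t) (vel \<alpha> \<beta> x t)) (vel \<alpha> \<beta> x t)
            + g (x t) (vel \<alpha> \<beta> x t) (vel \<alpha> \<beta> y t)"

lemma C1_curve_extension:
  fixes x :: "real \<Rightarrow> 'v"
  assumes "C1_curve S \<alpha> \<beta> x"
  obtains U X where "open U" "{\<alpha>..\<beta>} \<subseteq> U" "C1 U X" "\<forall>t\<in>{\<alpha>..\<beta>}. X t = x t"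
    "continuous_on U X" "continuous_on U (\<lambda>t. dd X t 1)"
    "\<forall>t\<in>{\<alpha>..\<beta>}. vel \<alpha> \<beta> x t = dd X t 1" "x ` {\<alpha>..\<beta>} \<subseteq> S"
proof -
  obtain U X where X: "open U" "{\<alpha>..\<beta>} \<subseteq> U" "C1 U X" "\<forall>t\<in>{\<alpha>..\<beta>}. X t = x t"
    using assms unfolding C1_curve_def by blast
  show ?thesis
    by (rule that[OF X C1_continuous_on_real[OF tvs_V X(3)] C1_continuous_on_dd[OF X(3)]])
       (use C1_extension_vel[OF ab X(3,2,4)] assms in \<open>auto simp: C1_curve_def\<close>)
qed

lemma tube_in_domain:
  assumes U: "open U" "{\<alpha>..\<beta>} \<subseteq> U" and cX: "continuous_on U X" and cY: "continuous_on U Y"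
    and XI: "\<forall>t\<in>{\<alpha>..\<beta>}. X t \<in> \<Omega>"
  obtains \<delta> where "\<delta> > 0" "\<And>t \<sigma>. t \<in> {\<alpha>..\<beta>} \<Longrightarrow> \<bar>\<sigma>\<bar> \<le> \<delta> \<Longrightarrow> X t + \<sigma> *\<^sub>R Y t \<in> \<Omega>"
proof -
  define f where "f = (\<lambda>q::real\<times>real. X (snd q) + fst q *\<^sub>R Y (snd q))"
  have cf: "continuous_on (UNIV \<times> U) f"
    unfolding f_def
    by (intro tvs_continuous_on_add[OF tvs_V] tvs_continuous_on_scaleR[OF tvs_V]
        continuous_on_fst continuous_on_id
        continuous_on_compose2[OF cX continuous_on_snd[OF continuous_on_id]]
        continuous_on_compose2[OF cY continuous_on_snd[OF continuous_on_id]]) auto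
  have oOb: "open ((UNIV \<times> U) \<inter> f -` \<Omega>)"
    by (rule continuous_open_preimage[OF cf open_Times[OF open_UNIV U(1)] open_dom])
  have "{0::real} \<times> {\<alpha>..\<beta>} \<subseteq> (UNIV \<times> U) \<inter> f -` \<Omega>"
    using U(2) XI by (auto simp: f_def)
  then have "\<exists>X0. (0::real) \<in> X0 \<and> open X0 \<and> X0 \<times> {\<alpha>..\<beta>} \<subseteq> (UNIV \<times> U) \<inter> f -` \<Omega>"
    by (rule Elementary_Topology.tube_lemma[OF compact_Icc oOb])
  then obtain V where V: "(0::real) \<in> V" "open V" "V \<times> {\<alpha>..\<beta>} \<subseteq> (UNIV \<times> U) \<inter> f -` \<Omega>"
    by blast
  obtain e where e: "e > 0" "ball 0 e \<subseteq> V" using V(1,2) open_contains_ball by blast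
  show ?thesis
  proof (rule that[of "e/2"])
    show "e/2 > 0" using e by simp
    fix t \<sigma> assume t: "t \<in> {\<alpha>..\<beta>}" and s: "\<bar>\<sigma>\<bar> \<le> e/2"
    have "\<sigma> \<in> V" using e s by (auto simp: subset_eq dist_real_def)
    then have "(\<sigma>, t) \<in> V \<times> {\<alpha>..\<beta>}" using t by simp
    then have "(\<sigma>, t) \<in> (UNIV \<times> U) \<inter> f -` \<Omega>" using V(3) by blast
    then show "X t + \<sigma> *\<^sub>R Y t \<in> \<Omega>" by (simp add: f_def)
  qed
qed

lemma variation_tube:
  fixes x y :: "real \<Rightarrow> 'v"
  assumes x: "C1_curve \<Omega> \<alpha> \<beta> x" and y: "C1_curve UNIV \<alpha> \<beta> y"
  obtains \<delta> P Q where "\<delta> > 0" "continuous_on {\<alpha>..\<beta>} P" "continuous_on {\<alpha>..\<beta>} Q"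
    "\<And>t. t \<in> {\<alpha>..\<beta>} \<Longrightarrow> P t = (x t, vel \<alpha> \<beta> x t, vel \<alpha> \<beta> x t)"
    "\<And>t. t \<in> {\<alpha>..\<beta>} \<Longrightarrow> Q t = (y t, vel \<alpha> \<beta> y t, vel \<alpha> \<beta> y t)"
    "\<And>t \<sigma>. t \<in> {\<alpha>..\<beta>} \<Longrightarrow> \<bar>\<sigma>\<bar> \<le> \<delta> \<Longrightarrow> P t + \<sigma> *\<^sub>R Q t \<in> metric_dom"
proof -
  let ?I = "{\<alpha>..\<beta>}"
  obtain U1 X where X: "open U1" "?I \<subseteq> U1" "C1 U1 X" "\<forall>t\<in>?I. X t = x t"
    "continuous_on U1 X" "continuous_on U1 (\<lambda>t. dd X t 1)"
    "\<forall>t\<in>?I. vel \<alpha> \<beta> x t = dd X t 1" "x ` ?I \<subseteq> \<Omega>"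
    by (rule C1_curve_extension[OF x])
  obtain U2 Y where Y: "open U2" "?I \<subseteq> U2" "C1 U2 Y" "\<forall>t\<in>?I. Y t = y t"
    "continuous_on U2 Y" "continuous_on U2 (\<lambda>t. dd Y t 1)"
    "\<forall>t\<in>?I. vel \<alpha> \<beta> y t = dd Y t 1"
    by (rule C1_curve_extension[OF y])
  define U where "U = U1 \<inter> U2"
  have oU: "open U" and IU: "?I \<subseteq> U" using X Y by (auto simp: U_def)
  have cX: "continuous_on U X" and cX': "continuous_on U (\<lambda>t. dd X t 1)"
   and cY: "continuous_on U Y" and cY': "continuous_on U (\<lambda>t. dd Y t 1)"
    using X(5,6) Y(5,6) continuous_on_subset unfolding U_def by blast+
  obtain \<delta> where \<delta>: "\<delta> > 0" "\<And>t \<sigma>. t \<in> ?I \<Longrightarrow> \<bar>\<sigma>\<bar> \<le> \<delta> \<Longrightarrow> X t + \<sigma> *\<^sub>R Y t \<in> \<Omega>"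
    using tube_in_domain[OF oU IU cX cY] X(4,8) by (metis image_subset_iff)
  define P where "P t = (X t, dd X t 1, dd X t 1)" for t
  define Q where "Q t = (Y t, dd Y t 1, dd Y t 1)" for t
  have PQ_dom: "P t + \<sigma> *\<^sub>R Q t \<in> metric_dom" if "t \<in> ?I" "\<bar>\<sigma>\<bar> \<le> \<delta>" for t \<sigma>
    using \<delta>(2)[OF that] by (simp add: P_def Q_def metric_dom_def)
  have cP: "continuous_on ?I P" and cQ: "continuous_on ?I Q"
    unfolding P_def Q_def using IU by (auto intro!: continuous_on_Pair intro: continuous_on_subset cX cX' cY cY')
  show ?thesis
  proof (rule that[OF \<delta>(1) cP cQ])
    fix t \<sigma> assume t: "t \<in> ?I"
    then show "P t = (x t, vel \<alpha> \<beta> x t, vel \<alpha> \<beta> x t)" "Q t = (y t, vel \<alpha> \<beta> y t, vel \<alpha> \<beta> y t)"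
      using X(4,7) Y(4,7) by (auto simp: P_def Q_def)
    assume "\<bar>\<sigma>\<bar> \<le> \<delta>"
    with t show "P t + \<sigma> *\<^sub>R Q t \<in> metric_dom" by (rule PQ_dom)
  qed
qed

lemma energy_first_variation:
  fixes x y :: "real \<Rightarrow> 'v"
  assumes x: "C1_curve \<Omega> \<alpha> \<beta> x" and y: "C1_curve UNIV \<alpha> \<beta> y"
  shows "((\<lambda>s. (energy g \<alpha> \<beta> (\<lambda>t. x t + s *\<^sub>R y t) - energy g \<alpha> \<beta> x) / s)
           \<longlongrightarrow> integral {\<alpha>..\<beta>} (first_variation x y)) (at 0)"
proof -
  let ?I = "{\<alpha>..\<beta>}"
  obtain \<delta> P Q where \<delta>: "\<delta> > 0" and cP: "continuous_on ?I P" and cQ: "continuous_on ?I Q"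
    and P: "\<And>t. t \<in> ?I \<Longrightarrow> P t = (x t, vel \<alpha> \<beta> x t, vel \<alpha> \<beta> x t)"
    and Q: "\<And>t. t \<in> ?I \<Longrightarrow> Q t = (y t, vel \<alpha> \<beta> y t, vel \<alpha> \<beta> y t)"
    and PQ_dom: "\<And>t \<sigma>. t \<in> ?I \<Longrightarrow> \<bar>\<sigma>\<bar> \<le> \<delta> \<Longrightarrow> P t + \<sigma> *\<^sub>R Q t \<in> metric_dom"
    by (rule variation_tube[OF x y]) blast
  define F where "F s t = metric_fn (P t + s *\<^sub>R Q t)" for s t
  define \<Phi> where "\<Phi> q = dd metric_fn (P (fst q) + snd q *\<^sub>R Q (fst q)) (Q (fst q))" for q
  have cPQ: "continuous_on (?I \<times> {-\<delta>..\<delta>}) (\<lambda>q. P (fst q) + snd q *\<^sub>R Q (fst q))"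
    by (intro tvs_continuous_on_add[OF tvs_V3] tvs_continuous_on_scaleR[OF tvs_V3] continuous_on_snd
        continuous_on_id continuous_on_compose2[OF cP continuous_on_fst] continuous_on_compose2[OF cQ continuous_on_fst])
      auto
  have "continuous_on (?I \<times> {-\<delta>..\<delta>}) \<Phi>"
  proof -
    have "continuous_on (metric_dom \<times> UNIV) (\<lambda>q. dd metric_fn (fst q) (snd q))"
      using C1_metric_fn unfolding C1_def by (simp add: case_prod_beta)
    moreover have "continuous_on (?I \<times> {-\<delta>..\<delta>}) (\<lambda>q. (P (fst q) + snd q *\<^sub>R Q (fst q), Q (fst q)))"
      by (intro continuous_on_Pair cPQ continuous_on_compose2[OF cQ continuous_on_fst]) auto
    ultimately have "continuous_on (?I \<times> {-\<delta>..\<delta>})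
        (\<lambda>q. (\<lambda>p. dd metric_fn (fst p) (snd p)) (P (fst q) + snd q *\<^sub>R Q (fst q), Q (fst q)))"
      by (rule continuous_on_compose2) (auto intro!: PQ_dom simp: abs_le_iff)
    then show ?thesis by (simp add: \<Phi>_def)
  qed
  moreover have "continuous_on ?I (F s)" if "\<bar>s\<bar> \<le> \<delta>" for s
    unfolding F_def using that PQ_dom
    by (intro continuous_on_compose2[OF continuous_on_metric_fn] tvs_continuous_on_add[OF tvs_V3]
        tvs_continuous_on_scaleR[OF tvs_V3] continuous_on_const cP cQ) auto
  moreover have "\<exists>\<theta>. \<bar>\<theta>\<bar> \<le> \<bar>s\<bar> \<and> F s t - F 0 t = s * \<Phi> (t, \<theta>)" if "t \<in> ?I" "\<bar>s\<bar> \<le> \<delta>" for s t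
    using C1_MVT[OF C1_metric_fn, of s "P t" "Q t"] PQ_dom[OF that(1)] that(2)
    by (simp add: F_def \<Phi>_def)
  ultimately have "((\<lambda>s. (integral ?I (F s) - integral ?I (F 0)) / s) \<longlongrightarrow> integral ?I (\<lambda>t. \<Phi> (t, 0))) (at 0)"
    by (rule integral_diff_quotient_tendsto[OF ab \<delta>])
  note lim = this
  have E: "energy g \<alpha> \<beta> (\<lambda>t. x t + s *\<^sub>R y t) = integral ?I (F s) / 2" for s
    unfolding energy_def
  proof -
    have "integral ?I (\<lambda>t. g (x t + s *\<^sub>R y t) (vel \<alpha> \<beta> (\<lambda>t. x t + s *\<^sub>R y t) t) (vel \<alpha> \<beta> (\<lambda>t. x t + s *\<^sub>R y t) t))
        = integral ?I (F s)"
      using vel_add_scaleR[OF tvs_V ab x y] P Q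
      by (intro integral_cong) (simp add: F_def metric_fn_def)
    then show "1 / 2 * integral ?I (\<lambda>t. g (x t + s *\<^sub>R y t) (vel \<alpha> \<beta> (\<lambda>t. x t + s *\<^sub>R y t) t)
        (vel \<alpha> \<beta> (\<lambda>t. x t + s *\<^sub>R y t) t)) = integral ?I (F s) / 2" by simp
  qed
  have E0: "energy g \<alpha> \<beta> x = integral ?I (F 0) / 2" using E[of 0] by simp
  have quotient: "(energy g \<alpha> \<beta> (\<lambda>t. x t + s *\<^sub>R y t) - energy g \<alpha> \<beta> x) / s
      = 1 / 2 * ((integral ?I (F s) - integral ?I (F 0)) / s)" for s
    unfolding E E0 by (simp add: diff_divide_distrib)
  have "integral ?I (\<lambda>t. \<Phi> (t, 0)) = 2 * integral ?I (first_variation x y)"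
  proof -
    have "\<Phi> (t, 0) = 2 * first_variation x y t" if t: "t \<in> ?I" for t
    proof -
      have xt: "x t \<in> \<Omega>" using x t unfolding C1_curve_def by blast
      have "\<Phi> (t, 0) = dd metric_fn (x t, vel \<alpha> \<beta> x t, vel \<alpha> \<beta> x t) (y t, vel \<alpha> \<beta> y t, vel \<alpha> \<beta> y t)"
        using P[OF t] Q[OF t] by (simp add: \<Phi>_def)
      also have "\<dots> = 2 * first_variation x y t"
        unfolding dd_metric_fn[OF xt] first_variation_def
          g_sym[OF xt, of "vel \<alpha> \<beta> x t" "A (x t) (y t) (vel \<alpha> \<beta> x t)"]
          g_sym[OF xt, of "vel \<alpha> \<beta> y t" "vel \<alpha> \<beta> x t"]
        by simp
      finally show ?thesis .
    qed
    then have "integral ?I (\<lambda>t. \<Phi> (t, 0)) = integral ?I (\<lambda>t. 2 * first_variation x y t)"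
      by (intro integral_cong) simp
    then show ?thesis by simp
  qed
  with tendsto_mult_left[OF lim, of "1 / 2"] show ?thesis
    unfolding quotient by simp
qed

lemma energy_critical_first_variation:
  assumes c: "energy_critical \<Omega> g \<alpha> \<beta> x" and y: "C1_curve UNIV \<alpha> \<beta> y" "y \<alpha> = 0" "y \<beta> = 0"
  shows "integral {\<alpha>..\<beta>} (first_variation x y) = 0"
proof -
  have x: "C1_curve \<Omega> \<alpha> \<beta> x" using c unfolding energy_critical_def by blast
  have "((\<lambda>s. (energy g \<alpha> \<beta> (\<lambda>t. x t + s *\<^sub>R y t) - energy g \<alpha> \<beta> x) / s) \<longlongrightarrow> 0) (at 0)"
    using c y unfolding energy_critical_def by blast
  from tendsto_unique[OF _ energy_first_variation[OF x y(1)] this] show ?thesis by simp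
qed

lemma first_variation_imp_energy_critical:
  assumes x: "C1_curve \<Omega> \<alpha> \<beta> x"
    and H: "\<And>y. C1_curve UNIV \<alpha> \<beta> y \<Longrightarrow> y \<alpha> = 0 \<Longrightarrow> y \<beta> = 0 \<Longrightarrow> integral {\<alpha>..\<beta>} (first_variation x y) = 0"
  shows "energy_critical \<Omega> g \<alpha> \<beta> x"
  unfolding energy_critical_def
proof (intro conjI allI impI x)
  fix y :: "real \<Rightarrow> 'v" assume y: "C1_curve UNIV \<alpha> \<beta> y \<and> y \<alpha> = 0 \<and> y \<beta> = 0"
  then show "((\<lambda>s. (energy g \<alpha> \<beta> (\<lambda>t. x t + s *\<^sub>R y t) - energy g \<alpha> \<beta> x) / s) \<longlongrightarrow> 0) (at 0)"
    using energy_first_variation[OF x, of y] H[of y] by simp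
qed

lemma C1_curve_scaled_vector:
  fixes \<phi> \<phi>' :: "real \<Rightarrow> real" and w :: 'v
  assumes U: "open U" "{\<alpha>..\<beta>} \<subseteq> U" and d: "\<And>t. t \<in> U \<Longrightarrow> (\<phi> has_real_derivative \<phi>' t) (at t)"
    and c: "continuous_on U \<phi>'"
  shows "C1_curve UNIV \<alpha> \<beta> (\<lambda>t. \<phi> t *\<^sub>R w)" "\<And>t. t \<in> {\<alpha>..\<beta>} \<Longrightarrow> vel \<alpha> \<beta> (\<lambda>t. \<phi> t *\<^sub>R w) t = \<phi>' t *\<^sub>R w"
proof -
  have v: "has_velocity (\<lambda>t. \<phi> t *\<^sub>R w) t (\<phi>' t *\<^sub>R w)" if "t \<in> U" for t
  proof -
    have "((\<lambda>s. (\<phi> s - \<phi> t) / (s - t)) \<longlongrightarrow> \<phi>' t) (at t)"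
      using d[OF that] unfolding has_field_derivative_iff .
    from tvs_tendsto_scaleR[OF tvs_V this tendsto_const[of w]]
    show ?thesis unfolding has_velocity_def by (simp add: scaleR_diff_left[symmetric])
  qed
  have cv: "continuous_on U (\<lambda>t. \<phi>' t *\<^sub>R w)"
    by (intro tvs_continuous_on_scaleR[OF tvs_V] c continuous_on_const)
  have C: "C1 U (\<lambda>t. \<phi> t *\<^sub>R w)" and dd: "\<And>t. t \<in> U \<Longrightarrow> dd (\<lambda>t. \<phi> t *\<^sub>R w) t 1 = \<phi>' t *\<^sub>R w"
    using has_velocity_C1[OF tvs_V U(1) v cv] by auto
  show "C1_curve UNIV \<alpha> \<beta> (\<lambda>t. \<phi> t *\<^sub>R w)" unfolding C1_curve_def using C U by blast
  show "vel \<alpha> \<beta> (\<lambda>t. \<phi> t *\<^sub>R w) t = \<phi>' t *\<^sub>R w" if "t \<in> {\<alpha>..\<beta>}" for t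
    using C1_extension_vel[OF ab C U(2) _ that] dd that U(2) by auto
qed

lemma C1_curve_continuous_on:
  fixes x :: "real \<Rightarrow> 'v"
  assumes "C1_curve S \<alpha> \<beta> x"
  shows "continuous_on {\<alpha>..\<beta>} x" "continuous_on {\<alpha>..\<beta>} (vel \<alpha> \<beta> x)"
proof -
  obtain U X where X: "open U" "{\<alpha>..\<beta>} \<subseteq> U" "C1 U X" "\<forall>t\<in>{\<alpha>..\<beta>}. X t = x t"
    "continuous_on U X" "continuous_on U (\<lambda>t. dd X t 1)"
    "\<forall>t\<in>{\<alpha>..\<beta>}. vel \<alpha> \<beta> x t = dd X t 1" "x ` {\<alpha>..\<beta>} \<subseteq> S"
    by (rule C1_curve_extension[OF assms])
  show "continuous_on {\<alpha>..\<beta>} x"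
    using continuous_on_subset[OF X(5) X(2)] X(4) by (metis continuous_on_cong)
  show "continuous_on {\<alpha>..\<beta>} (vel \<alpha> \<beta> x)"
    using continuous_on_subset[OF X(6) X(2)] X(7) by (metis (mono_tags, lifting) continuous_on_cong)
qed

lemma continuous_on_metric_comp:
  fixes a b c :: "real \<Rightarrow> 'v"
  assumes "continuous_on S a" "continuous_on S b" "continuous_on S c" "a ` S \<subseteq> \<Omega>"
  shows "continuous_on S (\<lambda>t. g (a t) (b t) (c t))"
proof -
  have "continuous_on S (\<lambda>t. metric_fn (a t, b t, c t))"
    by (rule continuous_on_compose2[OF continuous_on_metric_fn]) (use assms in \<open>auto simp: metric_dom_def intro!: continuous_on_Pair\<close>)
  then show ?thesis by (simp add: metric_fn_def)
qed

lemma continuous_on_A_comp: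
  fixes a b c :: "real \<Rightarrow> 'v"
  assumes "continuous_on S a" "continuous_on S b" "continuous_on S c" "a ` S \<subseteq> \<Omega>"
  shows "continuous_on S (\<lambda>t. A (a t) (b t) (c t))"
proof -
  have "continuous_on S (\<lambda>t. (\<lambda>(v, \<xi>, w). A v \<xi> w) (a t, b t, c t))"
    by (rule continuous_on_compose2[OF continuous_on_A]) (use assms in \<open>auto intro!: continuous_on_Pair\<close>)
  then show ?thesis by simp
qed

lemma energy_critical_DERIV_metric:
  assumes c: "energy_critical \<Omega> g \<alpha> \<beta> x" and t: "t \<in> {\<alpha>..\<beta>}"
  shows "((\<lambda>s. g (x s) (vel \<alpha> \<beta> x s) w) has_real_derivative
            g (x t) (A (x t) w (vel \<alpha> \<beta> x t)) (vel \<alpha> \<beta> x t)) (at t within {\<alpha>..\<beta>})"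
proof -
  let ?I = "{\<alpha>..\<beta>}"
  have x: "C1_curve \<Omega> \<alpha> \<beta> x" using c unfolding energy_critical_def by blast
  have xO: "x ` ?I \<subseteq> \<Omega>" using x unfolding C1_curve_def by blast
  note cx = C1_curve_continuous_on[OF x]
  define a where "a = (\<lambda>t. g (x t) (A (x t) w (vel \<alpha> \<beta> x t)) (vel \<alpha> \<beta> x t))"
  define b where "b = (\<lambda>t. g (x t) (vel \<alpha> \<beta> x t) w)"
  have ca: "continuous_on ?I a" unfolding a_def
    by (intro continuous_on_metric_comp continuous_on_A_comp cx continuous_on_const xO)
  have cb: "continuous_on ?I b" unfolding b_def
    by (intro continuous_on_metric_comp cx continuous_on_const xO)
  have "(b has_real_derivative a t) (at t within ?I)"
  proof (rule du_Bois_Reymond[OF ab ca cb _ t])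
    fix \<phi> \<phi>' :: "real \<Rightarrow> real" and U
    assume U: "open U" "?I \<subseteq> U" and d: "\<forall>t\<in>U. (\<phi> has_real_derivative \<phi>' t) (at t)"
      and c\<phi>: "continuous_on U \<phi>'" and z: "\<phi> \<alpha> = 0" "\<phi> \<beta> = 0"
    note pc = C1_curve_scaled_vector[OF U, where \<phi>=\<phi> and \<phi>'=\<phi>' and w=w, OF _ c\<phi>]
    have y: "C1_curve UNIV \<alpha> \<beta> (\<lambda>t. \<phi> t *\<^sub>R w)" using pc(1) d by blast
    have vy: "\<And>t. t \<in> ?I \<Longrightarrow> vel \<alpha> \<beta> (\<lambda>t. \<phi> t *\<^sub>R w) t = \<phi>' t *\<^sub>R w" using pc(2) d by blast
    have "integral ?I (first_variation x (\<lambda>t. \<phi> t *\<^sub>R w)) = 0"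
      by (rule energy_critical_first_variation[OF c y]) (use z in auto)
    moreover have "first_variation x (\<lambda>t. \<phi> t *\<^sub>R w) s = \<phi> s * a s + \<phi>' s * b s" if s: "s \<in> ?I" for s
    proof -
      have xs: "x s \<in> \<Omega>" using xO s by auto
      have "A (x s) (\<phi> s *\<^sub>R w) (vel \<alpha> \<beta> x s) = \<phi> s *\<^sub>R A (x s) w (vel \<alpha> \<beta> x s)"
        using linear_scale[OF A_linear_dir[OF xs, of "vel \<alpha> \<beta> x s"]] by simp
      then show ?thesis unfolding first_variation_def a_def b_def using vy[OF s] g_scaleR_left[OF xs] g_scaleR_right[OF xs] by simp
    qed
    ultimately show "integral ?I (\<lambda>t. \<phi> t * a t + \<phi>' t * b t) = 0"
      using integral_cong[of ?I "first_variation x (\<lambda>t. \<phi> t *\<^sub>R w)" "\<lambda>t. \<phi> t * a t + \<phi>' t * b t"] by simp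
  qed
  then show ?thesis by (simp add: a_def b_def)
qed

lemma C2_curve_DERIV_metric:
  assumes x2: "C2_curve \<Omega> \<alpha> \<beta> x" and t: "t \<in> {\<alpha>..\<beta>}" and y: "has_velocity y t y'"
  shows "((\<lambda>s. g (x s) (vel \<alpha> \<beta> x s) (y s)) has_real_derivative
      g (x t) (vel \<alpha> \<beta> (vel \<alpha> \<beta> x) t + A (x t) (vel \<alpha> \<beta> x t) (vel \<alpha> \<beta> x t)) (y t)
      + g (x t) (A (x t) (y t) (vel \<alpha> \<beta> x t)) (vel \<alpha> \<beta> x t) + g (x t) (vel \<alpha> \<beta> x t) y')
      (at t within {\<alpha>..\<beta>})"
proof -
  let ?I = "{\<alpha>..\<beta>}"
  obtain U X X' X'' where IU: "?I \<subseteq> U" and Xx: "\<forall>t\<in>?I. X t = x t"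
    and dX: "\<And>t. t \<in> U \<Longrightarrow> has_velocity X t (X' t)" and dX': "\<And>t. t \<in> U \<Longrightarrow> has_velocity X' t (X'' t)"
    using C2_curve_extension[OF x2] by blast
  have vx: "\<forall>t\<in>?I. X' t = vel \<alpha> \<beta> x t"
    using IU by (auto intro!: has_velocity_vel[OF ab dX, symmetric] Xx)
  have vvx: "X'' t = vel \<alpha> \<beta> (vel \<alpha> \<beta> x) t"
    using IU t by (auto intro!: has_velocity_vel[OF ab dX', symmetric] vx)
  have tU: "t \<in> U" using t IU by auto
  have Xt: "X t = x t" "X' t = vel \<alpha> \<beta> x t" using t Xx vx by auto
  have "X t \<in> \<Omega>" using x2 t Xt unfolding C2_curve_def by auto
  from DERIV_metric_along_curves[OF dX[OF tU] dX'[OF tU] y this]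
  have "((\<lambda>s. g (X s) (X' s) (y s)) has_real_derivative
      g (x t) (vel \<alpha> \<beta> (vel \<alpha> \<beta> x) t + A (x t) (vel \<alpha> \<beta> x t) (vel \<alpha> \<beta> x t)) (y t)
      + g (x t) (A (x t) (y t) (vel \<alpha> \<beta> x t)) (vel \<alpha> \<beta> x t) + g (x t) (vel \<alpha> \<beta> x t) y')
      (at t within ?I)"
    unfolding Xt vvx by (rule has_field_derivative_at_within)
  then show ?thesis
    by (rule has_field_derivative_transform_within[OF _ zero_less_one t]) (use Xx vx in auto)
qed

lemma energy_critical_iff_geodesic:
  assumes x2: "C2_curve \<Omega> \<alpha> \<beta> x"
  shows "energy_critical \<Omega> g \<alpha> \<beta> x \<longleftrightarrow> geodesic \<Omega> A \<alpha> \<beta> x"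
proof -
  let ?I = "{\<alpha>..\<beta>}"
  have x: "C1_curve \<Omega> \<alpha> \<beta> x" by (rule C2_curve_imp_C1_curve[OF x2])
  have xO: "x t \<in> \<Omega>" if "t \<in> ?I" for t using x that unfolding C1_curve_def by blast
  define \<gamma> where "\<gamma> t = vel \<alpha> \<beta> (vel \<alpha> \<beta> x) t + A (x t) (vel \<alpha> \<beta> x t) (vel \<alpha> \<beta> x t)" for t
  note DERIV_metric = C2_curve_DERIV_metric[OF x2, folded \<gamma>_def]
  have geodesic_iff: "geodesic \<Omega> A \<alpha> \<beta> x \<longleftrightarrow> (\<forall>t\<in>?I. \<gamma> t = 0)"
    using x2 unfolding geodesic_def \<gamma>_def by blast
  show ?thesis
  proof
    assume c: "energy_critical \<Omega> g \<alpha> \<beta> x"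
    have "\<gamma> t = 0" if t: "t \<in> ?I" for t
    proof (rule metric_nondegenerate[OF xO[OF t]])
      fix w
      have "((\<lambda>s. g (x s) (vel \<alpha> \<beta> x s) w) has_real_derivative
          g (x t) (\<gamma> t) w + g (x t) (A (x t) w (vel \<alpha> \<beta> x t)) (vel \<alpha> \<beta> x t)) (at t within ?I)"
        using DERIV_metric[OF t has_velocity_const[of w]] g_zero_right[OF xO[OF t]] by simp
      from has_field_derivative_unique[OF this energy_critical_DERIV_metric[OF c t] at_within_Icc_neq_bot[OF ab t]]
      show "g (x t) (\<gamma> t) w = 0" by simp
    qed
    then show "geodesic \<Omega> A \<alpha> \<beta> x" using geodesic_iff by blast
  next
    assume "geodesic \<Omega> A \<alpha> \<beta> x"
    then have \<gamma>0: "\<forall>t\<in>?I. \<gamma> t = 0" using geodesic_iff by blast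
    show "energy_critical \<Omega> g \<alpha> \<beta> x"
    proof (rule first_variation_imp_energy_critical[OF x])
      fix y :: "real \<Rightarrow> 'v" assume y: "C1_curve UNIV \<alpha> \<beta> y" "y \<alpha> = 0" "y \<beta> = 0"
      obtain V Y where Y: "?I \<subseteq> V" "C1 V Y" "\<forall>t\<in>?I. Y t = y t"
        using y(1) unfolding C1_curve_def by blast
      have "((\<lambda>s. g (x s) (vel \<alpha> \<beta> x s) (Y s)) has_real_derivative first_variation x y t) (at t within ?I)"
        if t: "t \<in> ?I" for t
        using DERIV_metric[OF t C1_has_velocity[OF Y(2)]] t Y \<gamma>0 g_zero_left[OF xO[OF t]]
          C1_extension_vel[OF ab Y(2,1,3) t]
        by (auto simp: first_variation_def)
      then have "integral ?I (first_variation x y) = g (x \<beta>) (vel \<alpha> \<beta> x \<beta>) (Y \<beta>) - g (x \<alpha>) (vel \<alpha> \<beta> x \<alpha>) (Y \<alpha>)"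
        using ab by (intro integral_DERIV_within) auto
      also have "\<dots> = 0" using Y(3) y(2,3) ab g_zero_right[OF xO] by simp
      finally show "integral ?I (first_variation x y) = 0" .
    qed
  qed
qed

lemma DERIV_metric_frozen_base:
  assumes dX: "has_velocity X t X'" and cV: "isCont V t" and Xt: "X t \<in> \<Omega>"
  shows "((\<lambda>s. g (X s) (V s) \<eta> - g (X t) (V s) \<eta>) has_real_derivative
          g (X t) (A (X t) X' (V t)) \<eta> + g (X t) (V t) (A (X t) X' \<eta>)) (at t)"
proof -
  define q where "q = (\<lambda>h::real. if h = 0 then X' else (1/h) *\<^sub>R (X (t + h) - X t))"
  define b where "b = (\<lambda>h. (X t, V (t + h), \<eta>))"
  define w where "w = (\<lambda>h. (q h, 0::'v, 0::'v))"
  have "\<forall>\<^sub>F h in at 0. (1/h) *\<^sub>R (X (t + h) - X t) = q h"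
    unfolding eventually_at by (intro exI[of _ 1]) (auto simp: q_def)
  from Lim_transform_eventually[OF dX[unfolded has_velocity_iff_at_0] this]
  have cw: "isCont w 0" unfolding w_def continuous_at by (intro tendsto_Pair tendsto_const) (simp add: q_def)
  have "((\<lambda>h. V (t + h)) \<longlongrightarrow> V t) (at 0)"
    using cV unfolding continuous_at by (rule LIM_offset_zero)
  then have cb: "isCont b 0" unfolding b_def continuous_at by (intro tendsto_Pair tendsto_const) simp
  have b0: "b 0 \<in> metric_dom" using Xt by (simp add: b_def metric_dom_def)
  have "((\<lambda>h. (metric_fn (b h + h *\<^sub>R w h) - metric_fn (b h)) / h) \<longlongrightarrow> dd metric_fn (b 0) (w 0)) (at 0)"
    by (rule C1_chain_moving_base[OF tvs_V3 C1_metric_fn cb cw b0])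
  moreover have "\<forall>\<^sub>F h in at (0::real). (metric_fn (b h + h *\<^sub>R w h) - metric_fn (b h)) / h =
      ((g (X (t + h)) (V (t + h)) \<eta> - g (X t) (V (t + h)) \<eta>) - (g (X t) (V t) \<eta> - g (X t) (V t) \<eta>)) / h"
    unfolding eventually_at by (intro exI[of _ 1]) (auto simp: b_def w_def q_def metric_fn_def)
  ultimately have "((\<lambda>h. ((g (X (t + h)) (V (t + h)) \<eta> - g (X t) (V (t + h)) \<eta>) - (g (X t) (V t) \<eta> - g (X t) (V t) \<eta>)) / h)
      \<longlongrightarrow> dd metric_fn (b 0) (w 0)) (at 0)"
    by (rule Lim_transform_eventually)
  moreover have "dd metric_fn (b 0) (w 0) = g (X t) (A (X t) X' (V t)) \<eta> + g (X t) (V t) (A (X t) X' \<eta>)"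
    using dd_metric_fn_base[OF Xt] by (simp add: b_def w_def q_def)
  ultimately show ?thesis unfolding DERIV_def by simp
qed

lemma energy_critical_weak_geodesic_equation:
  assumes c: "energy_critical \<Omega> g \<alpha> \<beta> x" and t: "t \<in> {\<alpha>..\<beta>}"
  shows "((\<lambda>s. g (x t) \<eta> (vel \<alpha> \<beta> x s)) has_real_derivative
           - g (x t) \<eta> (A (x t) (vel \<alpha> \<beta> x t) (vel \<alpha> \<beta> x t))) (at t within {\<alpha>..\<beta>})"
proof -
  let ?I = "{\<alpha>..\<beta>}"
  have x: "C1_curve \<Omega> \<alpha> \<beta> x" using c unfolding energy_critical_def by blast
  obtain U X where X: "open U" "?I \<subseteq> U" "C1 U X" "\<forall>t\<in>?I. X t = x t"
    "continuous_on U X" "continuous_on U (\<lambda>t. dd X t 1)" "\<forall>t\<in>?I. vel \<alpha> \<beta> x t = dd X t 1"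
    "x ` ?I \<subseteq> \<Omega>"
    by (rule C1_curve_extension[OF x])
  have tU: "t \<in> U" and xt: "x t \<in> \<Omega>" using t X(2,8) by auto
  have "isCont (\<lambda>s. dd X s 1) t" using X(1,6) tU by (simp add: continuous_on_eq_continuous_at)
  moreover have "X t \<in> \<Omega>" using X(4) t xt by simp
  ultimately have "((\<lambda>s. g (X s) (dd X s 1) \<eta> - g (X t) (dd X s 1) \<eta>) has_real_derivative
      g (X t) (A (X t) (dd X t 1) (dd X t 1)) \<eta> + g (X t) (dd X t 1) (A (X t) (dd X t 1) \<eta>)) (at t)"
    by (rule DERIV_metric_frozen_base[OF C1_has_velocity[OF X(3) tU]])
  then have "((\<lambda>s. g (X s) (dd X s 1) \<eta> - g (x t) (dd X s 1) \<eta>) has_real_derivative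
          g (x t) (A (x t) (vel \<alpha> \<beta> x t) (vel \<alpha> \<beta> x t)) \<eta> + g (x t) (vel \<alpha> \<beta> x t) (A (x t) (vel \<alpha> \<beta> x t) \<eta>))
        (at t within ?I)"
    using X(4,7) t by (simp add: has_field_derivative_at_within)
  then have "((\<lambda>s. g (x s) (vel \<alpha> \<beta> x s) \<eta> - g (x t) (vel \<alpha> \<beta> x s) \<eta>) has_real_derivative
          g (x t) (A (x t) (vel \<alpha> \<beta> x t) (vel \<alpha> \<beta> x t)) \<eta> + g (x t) (vel \<alpha> \<beta> x t) (A (x t) (vel \<alpha> \<beta> x t) \<eta>))
        (at t within ?I)"
    by (rule has_field_derivative_transform_within[OF _ zero_less_one t]) (use X(4,7) in auto)
  from DERIV_diff[OF energy_critical_DERIV_metric[OF c t, of \<eta>] this]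
  show ?thesis
    using g_sym[OF xt] A_sym[OF xt] by simp
qed

lemma energy_critical_imp_geodesic:
  fixes L :: "('v \<Rightarrow> real) set"
  assumes L: "\<forall>l\<in>L. linear l \<and> continuous_on UNIV l"
    and sep: "\<Inter>{{w. l w = 0} | l. l \<in> L} = {0}"
    and rep: "\<forall>l\<in>L. \<forall>v\<in>\<Omega>. \<exists>\<eta>. \<forall>w. l w = g v \<eta> w"
    and c: "energy_critical \<Omega> g \<alpha> \<beta> x"
  shows "C2_curve \<Omega> \<alpha> \<beta> x \<and> geodesic \<Omega> A \<alpha> \<beta> x"
proof -
  let ?I = "{\<alpha>..\<beta>}"
  have x: "C1_curve \<Omega> \<alpha> \<beta> x" using c unfolding energy_critical_def by blast
  have xO: "x ` ?I \<subseteq> \<Omega>" using x unfolding C1_curve_def by blast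
  define \<zeta> where "\<zeta> t = (-1::real) *\<^sub>R A (x t) (vel \<alpha> \<beta> x t) (vel \<alpha> \<beta> x t)" for t
  have c\<zeta>: "continuous_on ?I \<zeta>"
    unfolding \<zeta>_def using C1_curve_continuous_on[OF x] xO
    by (intro tvs_continuous_on_scaleR[OF tvs_V] continuous_on_const continuous_on_A_comp) auto
  have weak_deriv: "((\<lambda>s. l (vel \<alpha> \<beta> x s)) has_real_derivative l (\<zeta> t)) (at t within ?I)"
    if l: "l \<in> L" and t: "t \<in> ?I" for l t
  proof -
    have xt: "x t \<in> \<Omega>" using xO t by auto
    then obtain \<eta> where \<eta>: "\<And>w. l w = g (x t) \<eta> w" using rep l by blast
    show ?thesis
      using energy_critical_weak_geodesic_equation[OF c t, of \<eta>] g_scaleR_right[OF xt, of \<eta> "-1"]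
      by (simp add: \<eta> \<zeta>_def)
  qed
  have dvel: "((\<lambda>s. (1 / (s - t)) *\<^sub>R (vel \<alpha> \<beta> x s - vel \<alpha> \<beta> x t)) \<longlongrightarrow> \<zeta> t) (at t within ?I)"
    if t: "t \<in> ?I" for t
    by (rule weak_derivative_imp_derivative[OF lcs c\<zeta> _ _ weak_deriv t]) (use L sep in auto)
  obtain U X where X: "?I \<subseteq> U" "C1 U X" "\<forall>t\<in>?I. X t = x t" "\<forall>t\<in>?I. vel \<alpha> \<beta> x t = dd X t 1"
    using C1_curve_extension[OF x] by metis
  have dx: "((\<lambda>s. (1 / (s - t)) *\<^sub>R (x s - x t)) \<longlongrightarrow> vel \<alpha> \<beta> x t) (at t within ?I)"
    if t: "t \<in> ?I" for t
    using has_velocity_within[OF C1_has_velocity[OF X(2)] t X(3)] X(1,4) t by auto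
  have "C2_curve \<Omega> \<alpha> \<beta> x"
    by (rule C2_curve_of_derivatives[OF tvs_V ab xO dx dvel c\<zeta>])
  moreover have "vel \<alpha> \<beta> (vel \<alpha> \<beta> x) t = \<zeta> t" if t: "t \<in> ?I" for t
    by (rule vel_eqI[OF ab t dvel[OF t]])
  ultimately show ?thesis unfolding geodesic_def \<zeta>_def by simp
qed

end

theorem theorem6p3:
  fixes \<Omega> :: "'v::{real_vector,t2_space} set"
    and g :: "'v \<Rightarrow> 'v \<Rightarrow> 'v \<Rightarrow> real"
    and A :: "'v \<Rightarrow> 'v \<Rightarrow> 'v \<Rightarrow> 'v"
    and \<alpha> \<beta> :: real
  assumes "lcs TYPE('v)"
    and "open \<Omega>"
    and "\<alpha> < \<beta>"
    and "riem_metric \<Omega> g"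
    and "levi_civita \<Omega> g A"
  shows "(\<forall>x. C2_curve \<Omega> \<alpha> \<beta> x \<longrightarrow>
            (energy_critical \<Omega> g \<alpha> \<beta> x \<longleftrightarrow> geodesic \<Omega> A \<alpha> \<beta> x))
       \<and> (\<forall>L :: ('v \<Rightarrow> real) set.
            (\<forall>l\<in>L. linear l \<and> continuous_on UNIV l) \<and>
            \<Inter>{{w. l w = 0} | l. l \<in> L} = {0} \<and>
            (\<forall>l\<in>L. \<forall>v\<in>\<Omega>. \<exists>\<eta>. \<forall>w. l w = g v \<eta> w)
            \<longrightarrow> (\<forall>x. energy_critical \<Omega> g \<alpha> \<beta> x \<longrightarrow>
                    C2_curve \<Omega> \<alpha> \<beta> x \<and> geodesic \<Omega> A \<alpha> \<beta> x))"
proof -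
  interpret levi_civita_space \<Omega> g A \<alpha> \<beta>
    by (rule levi_civita_space.intro) (fact assms)+
  show ?thesis
  proof (rule conjI; intro allI impI)
    fix x assume "C2_curve \<Omega> \<alpha> \<beta> x"
    then show "energy_critical \<Omega> g \<alpha> \<beta> x \<longleftrightarrow> geodesic \<Omega> A \<alpha> \<beta> x"
      by (rule energy_critical_iff_geodesic)
  next
    fix L :: "('v \<Rightarrow> real) set" and x
    assume "(\<forall>l\<in>L. linear l \<and> continuous_on UNIV l) \<and> \<Inter>{{w. l w = 0} | l. l \<in> L} = {0} \<and>
      (\<forall>l\<in>L. \<forall>v\<in>\<Omega>. \<exists>\<eta>. \<forall>w. l w = g v \<eta> w)" and "energy_critical \<Omega> g \<alpha> \<beta> x"
    then show "C2_curve \<Omega> \<alpha> \<beta> x \<and> geodesic \<Omega> A \<alpha> \<beta> x"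
      by (elim conjE) (rule energy_critical_imp_geodesic)
  qed
qed

end
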